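(* Let $m\geq 2$, $a\geq m$ and $b\geq m-1$. Then for all $n$ sufficiently large, in $\mathbb{Z}[x_1,\dots,x_n]^{\Sigma_n}$, $$C_m\bigl(s(a)\,s(1^b)\,s(1^{m-2})\,s(1^{m-3})\cdots s(1)\bigr)=s(a+1,m-1,m-2,\ldots,2,1^{b-m+1})+s(a,m-1,m-2,\ldots,2,1^{b-m+2}).$$
   Context: For a partition $\lambda$ with at most $n$ parts, $s(\lambda)$ denotes the Schur polynomial in $x_1,\dots,x_n$. $1^k$ denotes $k$ parts equal to $1$; so $(a,m-1,\dots,2,1^{k})$ is the partition with parts $a,m-1,m-2,\dots,2$ followed by $k$ ones. For an integer $m\geq0$, a partition $\lambda$ is $m$-adapted if $\lambda_i>m-i$ for every $i\geq1$ with $\lambda_i>0$. $C_m$ is the additive endomorphism of the ring of symmetric polynomials with $C_m(s(\lambda))=s(\lambda)$ if $\lambda$ is $m$-adapted and $0$ otherwise. *)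

theory Defs
  imports Main "HOL-Library.Poly_Mapping"
begin

text \<open>Polynomials with integer coefficients in variables x_0, x_1, ... :
  finitely supported maps from exponent vectors to coefficients.
  The variable x_{k+1} of the paper is represented by index k.\<close>
type_synonym ipoly = "(nat \<Rightarrow>\<^sub>0 nat) \<Rightarrow>\<^sub>0 int"

definition is_partition :: "nat list \<Rightarrow> bool" where
  "is_partition lam \<longleftrightarrow> sorted_wrt (\<ge>) lam \<and> (\<forall>x\<in>set lam. 0 < x)"

definition cells :: "nat list \<Rightarrow> (nat \<times> nat) set" where
  "cells lam = {(i, j). i < length lam \<and> j < lam ! i}"

text \<open>Semistandard Young tableaux of shape lam with entries in {0..<n}
  (standing for 1..n); normalised to be 0 outside the diagram.\<close>
definition ssyt :: "nat \<Rightarrow> nat list \<Rightarrow> (nat \<Rightarrow> nat \<Rightarrow> nat) set" where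
  "ssyt n lam = {T.
     (\<forall>i j. (i, j) \<notin> cells lam \<longrightarrow> T i j = 0) \<and>
     (\<forall>(i, j)\<in>cells lam. T i j < n) \<and>
     (\<forall>i j. (i, Suc j) \<in> cells lam \<longrightarrow> T i j \<le> T i (Suc j)) \<and>
     (\<forall>i j. (Suc i, j) \<in> cells lam \<longrightarrow> T i j < T (Suc i) j)}"

definition tab_exp :: "nat list \<Rightarrow> (nat \<Rightarrow> nat \<Rightarrow> nat) \<Rightarrow> (nat \<Rightarrow>\<^sub>0 nat)" where
  "tab_exp lam T = (\<Sum>(i, j)\<in>cells lam. Poly_Mapping.single (T i j) 1)"

definition schur :: "nat \<Rightarrow> nat list \<Rightarrow> ipoly" where
  "schur n lam = (\<Sum>T\<in>ssyt n lam. Poly_Mapping.single (tab_exp lam T) 1)"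

text \<open>m-adapted: lam_i > m - i for every i >= 1 with lam_i > 0 (1-indexed).\<close>
definition adapted :: "nat \<Rightarrow> nat list \<Rightarrow> bool" where
  "adapted m lam \<longleftrightarrow> (\<forall>k < length lam. int (lam ! k) > int m - int (Suc k))"

definition schur_expansion :: "nat \<Rightarrow> ipoly \<Rightarrow> (nat list \<Rightarrow> int) \<Rightarrow> bool" where
  "schur_expansion n f c \<longleftrightarrow>
     (\<forall>lam. c lam \<noteq> 0 \<longrightarrow> is_partition lam \<and> length lam \<le> n) \<and>
     finite {lam. c lam \<noteq> 0} \<and>
     f = (\<Sum>lam | c lam \<noteq> 0. of_int (c lam) * schur n lam)"

definition Cop :: "nat \<Rightarrow> nat \<Rightarrow> ipoly \<Rightarrow> ipoly" where
  "Cop m n f = (let c = (THE c. schur_expansion n f c) in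
     (\<Sum>lam | c lam \<noteq> 0 \<and> adapted m lam. of_int (c lam) * schur n lam))"

end

theory Submission
  imports Defs "HOL-Library.FuncSet"
begin

text \<open>
  Adaptedness descends along vertical strips: if lam/mu is a vertical strip and lam is
  (m+1)-adapted, then mu is m-adapted. Hence the adapted part of the product can be computed
  factor by factor with the Pieri rule s(mu) s(1^k) = sum of s(lam) over vertical strips lam/mu
  of size k. For m = 2, s(a) s(1^b) = s(a+1, 1^(b-1)) + s(a, 1^b). In the step from m to m+1
  only the two staircase shapes of the m-adapted part contribute, and adding a vertical strip of
  size m-1 to such a shape yields an (m+1)-adapted shape only if it adds one box to each of the
  rows 2, ..., m (counting from 1), which produces the two staircase shapes for m+1.

  The Pieri rule is proved bijectively by row-inserting the entries of a column into a tableau.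
  Schur polynomials in n variables indexed by partitions of length at most n are linearly
  independent, since the monomial of the superstandard tableau is dominance-maximal; so the
  Schur expansion, and with it C_m, is determined. Taking n > b ensures that both shapes have
  at most n rows.
\<close>

type_synonym tableau = "nat \<Rightarrow> nat \<Rightarrow> nat"

section \<open>Partitions\<close>

definition row_len :: "nat list \<Rightarrow> nat \<Rightarrow> nat" where
  "row_len lam i = (if i < length lam then lam ! i else 0)"

lemma mem_cells_iff: "(i, j) \<in> cells lam \<longleftrightarrow> j < row_len lam i"
  by (auto simp: cells_def row_len_def)

lemma finite_cells: "finite (cells lam)"
proof -
  have "cells lam \<subseteq> {..<length lam} \<times> {..<Max (insert 0 (set lam))}"
    by (auto simp: cells_def intro!: order.strict_trans2[OF _ Max_ge])
  then show ?thesis by (rule finite_subset) auto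
qed

lemma is_partition_iff_row_len:
  "is_partition lam \<longleftrightarrow> (\<forall>i. row_len lam (Suc i) \<le> row_len lam i)
    \<and> (\<forall>i<length lam. 0 < row_len lam i)"
proof
  assume "is_partition lam"
  then show "(\<forall>i. row_len lam (Suc i) \<le> row_len lam i) \<and> (\<forall>i<length lam. 0 < row_len lam i)"
    unfolding is_partition_def row_len_def
    by (auto simp: sorted_wrt_iff_nth_less)
next
  assume a: "(\<forall>i. row_len lam (Suc i) \<le> row_len lam i) \<and> (\<forall>i<length lam. 0 < row_len lam i)"
  have mono: "row_len lam j \<le> row_len lam i" if "i \<le> j" for i j
    using that
  proof (induction j)
    case 0 then show ?case by simp
  next
    case (Suc j)
    then show ?case using a by (metis le_SucE le_trans order_refl)
  qed
  show "is_partition lam"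
    unfolding is_partition_def sorted_wrt_iff_nth_less
  proof safe
    fix i j assume "i < j" "j < length lam"
    then show "lam ! j \<le> lam ! i" using mono[of i j] by (simp add: row_len_def)
  next
    fix x assume "x \<in> set lam"
    then obtain i where "i < length lam" "lam ! i = x" by (auto simp: in_set_conv_nth)
    then show "0 < x" using a by (auto simp: row_len_def)
  qed
qed

lemma partition_row_len_antimono: "is_partition lam \<Longrightarrow> i \<le> j \<Longrightarrow> row_len lam j \<le> row_len lam i"
  unfolding is_partition_def row_len_def
  by (auto simp: sorted_wrt_iff_nth_less dest: le_neq_implies_less)

lemma partition_row_len_pos_iff: "is_partition lam \<Longrightarrow> (0 < row_len lam i) = (i < length lam)"
  by (auto simp: is_partition_iff_row_len) (auto simp: row_len_def split: if_splits)

lemma partition_eqI: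
  assumes "is_partition a" "is_partition b" "\<And>i. row_len a i = row_len b i"
  shows "a = b"
proof -
  have "i < length a \<longleftrightarrow> i < length b" for i
    using partition_row_len_pos_iff[OF assms(1), of i] partition_row_len_pos_iff[OF assms(2), of i]
      assms(3)[of i] by simp
  then have "length a = length b" by (metis nat_neq_iff)
  then show ?thesis using assms(3) by (auto intro!: nth_equalityI simp: row_len_def) (metis)
qed

lemma sum_list_eq_sum_row_len: "length lam \<le> L \<Longrightarrow> sum_list lam = (\<Sum>i<L. row_len lam i)"
proof -
  assume L: "length lam \<le> L"
  have "sum_list lam = (\<Sum>i<length lam. lam ! i)" by (simp add: sum_list_sum_nth atLeast0LessThan)
  also have "\<dots> = (\<Sum>i<length lam. row_len lam i)" by (simp add: row_len_def)
  also have "\<dots> = (\<Sum>i<L. row_len lam i)"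
    by (rule sum.mono_neutral_left) (use L in \<open>auto simp: row_len_def\<close>)
  finally show ?thesis .
qed

definition add_box :: "nat list \<Rightarrow> nat \<Rightarrow> nat list" where
  "add_box mu r = (if r < length mu then mu[r := Suc (mu ! r)] else mu @ [1])"

lemma row_len_add_box: "r \<le> length mu \<Longrightarrow> row_len (add_box mu r) i = row_len mu i + (if i
  = r then 1 else 0)"
  by (auto simp: add_box_def row_len_def nth_append)

lemma length_add_box: "r \<le> length mu \<Longrightarrow> length (add_box mu r) = max (length mu) (Suc r)"
  by (auto simp: add_box_def)

lemma is_partition_add_box:
  assumes "is_partition mu" "r \<le> length mu" "0 < r \<Longrightarrow> row_len mu r < row_len mu (r - 1)"
  shows "is_partition (add_box mu r)"
  unfolding is_partition_iff_row_len
proof safe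
  fix i
  show "row_len (add_box mu r) (Suc i) \<le> row_len (add_box mu r) i"
    using assms partition_row_len_antimono[OF assms(1), of i "Suc i"]
      by (auto simp: row_len_add_box)
next
  fix i assume "i < length (add_box mu r)"
  then show "0 < row_len (add_box mu r) i"
    using assms partition_row_len_pos_iff[OF assms(1), of i]
      by (auto simp: row_len_add_box length_add_box)
qed

lemma sum_list_add_box: "r \<le> length mu \<Longrightarrow> sum_list (add_box mu r) = Suc (sum_list mu)"
proof -
  assume r: "r \<le> length mu"
  let ?L = "Suc (length mu)"
  have "sum_list (add_box mu r) = (\<Sum>i<?L. row_len (add_box mu r) i)"
    by (rule sum_list_eq_sum_row_len) (use r in \<open>simp add: length_add_box\<close>)
  also have "\<dots> = (\<Sum>i<?L. row_len mu i + (if i = r then 1 else 0))" using r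
    by (simp add: row_len_add_box)
  also have "\<dots> = (\<Sum>i<?L. row_len mu i) + 1" using r by (simp add: sum.distrib)
  also have "(\<Sum>i<?L. row_len mu i) = sum_list mu" by (rule sum_list_eq_sum_row_len[symmetric]) simp
  finally show ?thesis by simp
qed

definition remove_box :: "nat list \<Rightarrow> nat \<Rightarrow> nat list" where
  "remove_box lam R = (if lam ! R = 1 then take R lam else lam[R := lam ! R - 1])"

locale corner =
  fixes lam :: "nat list" and R :: nat
  assumes part: "is_partition lam" and pos: "0 < row_len lam R"
    and cor: "row_len lam (Suc R) < row_len lam R"
begin

lemma R_lt_length: "R < length lam" using pos by (auto simp: row_len_def split: if_splits)

lemma row_len_remove_box: "row_len (remove_box lam R) i = row_len lam i - (if i = R then 1 else 0)"
proof (cases "lam ! R = 1")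
  case True
  have "row_len lam (Suc R) = 0" using cor True R_lt_length by (simp add: row_len_def)
  then have "length lam \<le> Suc R" using partition_row_len_pos_iff[OF part, of "Suc R"] by simp
  then have L: "length lam = Suc R" using R_lt_length by simp
  show ?thesis using True L by (auto simp: remove_box_def row_len_def)
next
  case False
  then show ?thesis using R_lt_length by (auto simp: remove_box_def row_len_def)
qed

lemma length_remove_box: "R \<le> length (remove_box lam R)"
  using R_lt_length by (auto simp: remove_box_def)

lemma is_partition_remove_box: "is_partition (remove_box lam R)"
  unfolding is_partition_iff_row_len
proof safe
  fix i show "row_len (remove_box lam R) (Suc i) \<le> row_len (remove_box lam R) i"
    using partition_row_len_antimono[OF part, of i "Suc i"] cor by (auto simp: row_len_remove_box)
next
  fix i assume "i < length (remove_box lam R)"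
  then show "0 < row_len (remove_box lam R) i"
    using partition_row_len_pos_iff[OF part, of i] R_lt_length pos
    by (auto simp: remove_box_def row_len_def nth_list_update split: if_splits)
qed

lemma add_box_remove_box: "add_box (remove_box lam R) R = lam"
proof (rule partition_eqI[OF is_partition_add_box[OF is_partition_remove_box length_remove_box]
      part])
  show "row_len (remove_box lam R) R < row_len (remove_box lam R) (R - 1)" if "0 < R"
    using partition_row_len_antimono[OF part, of "R - 1" R] pos that
      by (auto simp: row_len_remove_box)
  fix i show "row_len (add_box (remove_box lam R) R) i = row_len lam i"
    using pos by (simp add: row_len_add_box[OF length_remove_box] row_len_remove_box)
qed

end

section \<open>Vertical strips\<close>

definition vertical_strip :: "nat list \<Rightarrow> nat \<Rightarrow> nat list \<Rightarrow> bool" where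
  "vertical_strip mu k lam \<longleftrightarrow> is_partition lam \<and> (\<forall>i. row_len mu i \<le> row_len lam i
    \<and> row_len lam i \<le> Suc (row_len mu i)) \<and>
     sum_list lam = sum_list mu + k"

lemma vertical_strip_row_len_cases: "vertical_strip mu k lam \<Longrightarrow> row_len lam i
  = row_len mu i \<or> row_len lam i = Suc (row_len mu i)"
  unfolding vertical_strip_def by (metis le_SucE le_antisym)

lemma vertical_strip_0: "is_partition mu \<Longrightarrow> vertical_strip mu 0 lam \<Longrightarrow> lam = mu"
proof -
  assume pm: "is_partition mu" and v: "vertical_strip mu 0 lam"
  let ?L = "max (length mu) (length lam)"
  have eq: "(\<Sum>i<?L. row_len mu i) = (\<Sum>i<?L. row_len lam i)"
    using v sum_list_eq_sum_row_len[of lam ?L] sum_list_eq_sum_row_len[of mu ?L]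
      by (simp add: vertical_strip_def)
  have "row_len mu i = row_len lam i" for i
  proof (cases "i < ?L")
    case True
    show ?thesis by (rule sum_mono_inv[OF eq]) (use v True in \<open>auto simp: vertical_strip_def\<close>)
  next
    case False then show ?thesis by (auto simp: row_len_def)
  qed
  then show "lam = mu" using v pm by (intro partition_eqI) (auto simp: vertical_strip_def)
qed

lemma vertical_strip_lowest_box:
  assumes pm: "is_partition mu" and v: "vertical_strip mu (Suc k) lam"
  shows "\<exists>R. row_len lam R = Suc (row_len mu R) \<and> (\<forall>i>R. row_len lam i = row_len mu i)"
proof -
  define D where "D = {i. row_len lam i \<noteq> row_len mu i}"
  have fD: "finite D"
    by (rule finite_subset[of _ "{..<max (length mu) (length lam)}"]) (auto simp: D_def row_len_def)
  have "D \<noteq> {}"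
  proof
    assume "D = {}"
    then have "lam = mu" using pm v by (intro partition_eqI) (auto simp: D_def vertical_strip_def)
    then show False using v by (simp add: vertical_strip_def)
  qed
  define R where "R = Max D"
  have "R \<in> D" unfolding R_def using fD \<open>D \<noteq> {}\<close> by simp
  moreover have "\<forall>i>R. row_len lam i = row_len mu i" unfolding R_def using fD
    by (auto simp: D_def dest: Max_ge)
  ultimately show ?thesis using vertical_strip_row_len_cases[OF v, of R] unfolding D_def by auto
qed

lemma vertical_strip_remove_box:
  assumes pm: "is_partition mu" and v: "vertical_strip mu (Suc k) lam"
    and R: "row_len lam R = Suc (row_len mu R)" "\<forall>i>R. row_len lam i = row_len mu i"
  shows "corner lam R" "vertical_strip mu k (remove_box lam R)"
proof -
  have pl: "is_partition lam" using v by (simp add: vertical_strip_def)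
  show c: "corner lam R"
  proof
    show "is_partition lam" by (rule pl)
    show "0 < row_len lam R" using R by simp
    show "row_len lam (Suc R) < row_len lam R"
      using R partition_row_len_antimono[OF pm, of R "Suc R"] by simp
  qed
  interpret corner lam R by (rule c)
  have s: "sum_list lam = Suc (sum_list (remove_box lam R))"
    using sum_list_add_box[OF length_remove_box] add_box_remove_box by simp
  show "vertical_strip mu k (remove_box lam R)"
    unfolding vertical_strip_def
  proof (intro conjI allI)
    show "is_partition (remove_box lam R)" by (rule is_partition_remove_box)
    fix i
    show "row_len mu i \<le> row_len (remove_box lam R) i"
      and "row_len (remove_box lam R) i \<le> Suc (row_len mu i)"
      using v R by (auto simp: row_len_remove_box vertical_strip_def)
  next
    show "sum_list (remove_box lam R) = sum_list mu + k" using s v by (simp add: vertical_strip_def)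
  qed
qed

lemma length_le_sum_list_pos: "\<forall>x\<in>set xs. (0::nat) < x \<Longrightarrow> length xs \<le> sum_list xs"
  by (induction xs) auto

lemma finite_vertical_strips: "finite {lam. vertical_strip mu k lam}"
proof -
  let ?B = "sum_list mu + k"
  have "{lam. vertical_strip mu k lam} \<subseteq> {xs. set xs \<subseteq> {..?B} \<and> length xs \<le> ?B}"
  proof safe
    fix lam x assume v: "vertical_strip mu k lam" "x \<in> set lam"
    then show "x \<le> ?B" using member_le_sum_list[of x lam] by (simp add: vertical_strip_def)
  next
    fix lam assume v: "vertical_strip mu k lam"
    then show "length lam \<le> ?B" using length_le_sum_list_pos[of lam]
      by (simp add: vertical_strip_def is_partition_def)
  qed
  then show ?thesis by (rule finite_subset) (rule finite_lists_length_le, simp)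
qed

lemma vertical_strip_of_add_rows:
  assumes lam: "is_partition lam" and A: "finite A"
    and rows: "\<And>i. row_len lam i = row_len mu i + (if i \<in> A then 1 else 0)"
  shows "vertical_strip mu (card A) lam"
proof -
  define L where "L = max (length lam) (length mu)"
  have AL: "A \<subseteq> {..<L}"
  proof
    fix i assume "i \<in> A"
    then have "0 < row_len lam i" using rows[of i] by simp
    then show "i \<in> {..<L}" by (simp add: row_len_def L_def split: if_splits)
  qed
  have "sum_list lam = (\<Sum>i<L. row_len mu i) + (\<Sum>i<L. if i \<in> A then 1 else 0)"
    by (simp add: sum_list_eq_sum_row_len[of lam L] L_def rows sum.distrib)
  also have "(\<Sum>i<L. if i \<in> A then 1 else 0) = card A"
    using AL by (simp add: sum.If_cases Int_absorb1)
  also have "(\<Sum>i<L. row_len mu i) = sum_list mu"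
    by (simp add: sum_list_eq_sum_row_len[of mu L] L_def)
  finally show ?thesis using lam rows by (simp add: vertical_strip_def)
qed

section \<open>Semistandard tableaux\<close>

lemma ssyt_iff:
  "T \<in> ssyt n lam \<longleftrightarrow>
    (\<forall>i j. row_len lam i \<le> j \<longrightarrow> T i j = 0) \<and>
    (\<forall>i j. j < row_len lam i \<longrightarrow> T i j < n) \<and>
    (\<forall>i j. Suc j < row_len lam i \<longrightarrow> T i j \<le> T i (Suc j)) \<and>
    (\<forall>i j. j < row_len lam (Suc i) \<longrightarrow> T i j < T (Suc i) j)"
  unfolding ssyt_def by (auto simp: mem_cells_iff not_less)

lemma ssyt_row_mono:
  assumes "T \<in> ssyt n lam" "j \<le> j'" "j' < row_len lam i"
  shows "T i j \<le> T i j'"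
  using assms(2,3)
proof (induction j')
  case 0 then show ?case by simp
next
  case (Suc j')
  show ?case
  proof (cases "j = Suc j'")
    case True then show ?thesis by simp
  next
    case False
    then have "T i j \<le> T i j'" using Suc by simp
    also have "T i j' \<le> T i (Suc j')" using assms(1) Suc.prems by (auto simp: ssyt_iff)
    finally show ?thesis .
  qed
qed

lemma ssyt_row_index_le:
  assumes "T \<in> ssyt n lam" "is_partition lam" "j < row_len lam i"
  shows "i \<le> T i j"
  using assms(3)
proof (induction i)
  case 0 then show ?case by simp
next
  case (Suc i)
  have "T i j < T (Suc i) j" using assms(1) Suc.prems by (auto simp: ssyt_iff)
  moreover have "j < row_len lam i"
    using partition_row_len_antimono[OF assms(2), of i "Suc i"] Suc.prems by simp
  ultimately show ?case using Suc.IH by simp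
qed

lemma ssyt_col_mono:
  assumes "T \<in> ssyt n lam" "is_partition lam" "i < i'" "j < row_len lam i'"
  shows "T i j < T i' j"
  using assms(3,4)
proof (induction i')
  case 0 then show ?case by simp
next
  case (Suc i')
  have "T i' j < T (Suc i') j" using assms(1) Suc.prems by (auto simp: ssyt_iff)
  moreover have "j < row_len lam i'"
    using partition_row_len_antimono[OF assms(2), of i' "Suc i'"] Suc.prems by simp
  ultimately show ?case using Suc.IH Suc.prems by (cases "i = i'") auto
qed

lemma ssyt_empty_if_too_long:
  assumes "is_partition lam" "n < length lam"
  shows "ssyt n lam = {}"
proof (rule ccontr)
  assume "ssyt n lam \<noteq> {}"
  then obtain T where T: "T \<in> ssyt n lam" by auto
  have "0 < row_len lam (length lam - 1)" using partition_row_len_pos_iff[OF assms(1)] assms(2)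
    by simp
  then have "length lam - 1 \<le> T (length lam - 1) 0" "T (length lam - 1) 0 < n"
    using ssyt_row_index_le[OF T assms(1)] T by (auto simp: ssyt_iff)
  then show False using assms(2) by simp
qed

lemma finite_ssyt: "finite (ssyt n lam)"
proof -
  let ?f = "\<lambda>T::tableau. restrict (\<lambda>(i, j). T i j) (cells lam)"
  have inj: "inj_on ?f (ssyt n lam)"
  proof (rule inj_onI)
    fix T1 T2 assume T: "T1 \<in> ssyt n lam" "T2 \<in> ssyt n lam" and e: "?f T1 = ?f T2"
    show "T1 = T2"
    proof (intro ext)
      fix i j show "T1 i j = T2 i j"
      proof (cases "(i, j) \<in> cells lam")
        case True
        have "restrict (\<lambda>(i, j). T1 i j) (cells lam) (i, j)
          = restrict (\<lambda>(i, j). T2 i j) (cells lam) (i, j)"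
          using e by simp
        then show ?thesis using True by simp
      next
        case False then show ?thesis using T unfolding ssyt_def by auto
      qed
    qed
  qed
  have "?f ` ssyt n lam \<subseteq> PiE (cells lam) (\<lambda>_. {..<n})"
    by (auto simp: ssyt_def)
  then have "finite (?f ` ssyt n lam)" by (rule finite_subset) (simp add: finite_PiE finite_cells)
  then show ?thesis using finite_imageD[OF _ inj] by blast
qed

lemma tab_exp_replace_entry:
  assumes "p < row_len mu r"
  shows "tab_exp mu (T(r := (T r)(p := x))) + Poly_Mapping.single (T r p) 1 = tab_exp mu T
    + Poly_Mapping.single x 1"
proof -
  let ?T' = "T(r := (T r)(p := x))"
  have c: "(r, p) \<in> cells mu" using assms by (simp add: mem_cells_iff)
  have A: "tab_exp mu T = Poly_Mapping.single (T r p) 1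
    + (\<Sum>(i, j)\<in>cells mu - {(r,p)}. Poly_Mapping.single (T i j) 1)"
    unfolding tab_exp_def by (subst sum.remove[OF finite_cells c]) simp
  have B: "tab_exp mu ?T' = Poly_Mapping.single x 1
    + (\<Sum>(i, j)\<in>cells mu - {(r,p)}. Poly_Mapping.single (?T' i j) 1)"
    unfolding tab_exp_def by (subst sum.remove[OF finite_cells c]) simp
  have C: "(\<Sum>(i, j)\<in>cells mu - {(r,p)}. Poly_Mapping.single (?T' i j) 1)
    = (\<Sum>(i, j)\<in>cells mu - {(r,p)}. Poly_Mapping.single (T i j) 1)"
  proof (rule sum.cong[OF refl])
    fix c assume "c \<in> cells mu - {(r,p)}"
    then obtain i j where "c = (i,j)" "(i,j) \<noteq> (r,p)" by (cases c) auto
    then show "(case c of (i, j) \<Rightarrow> Poly_Mapping.single (?T' i j) 1)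
      = (case c of (i, j) \<Rightarrow> Poly_Mapping.single (T i j) 1)"
      by auto
  qed
  show ?thesis unfolding A B C by (simp only: ac_simps)
qed

lemma cells_add_box: "r \<le> length mu \<Longrightarrow> cells (add_box mu r) = insert (r, row_len mu r) (cells mu)"
  by (auto simp: mem_cells_iff row_len_add_box split: if_splits)

lemma tab_exp_add_box:
  assumes "r \<le> length mu"
  shows "tab_exp (add_box mu r) (T(r := (T r)(row_len mu r := x))) = tab_exp mu T
    + Poly_Mapping.single x 1"
proof -
  let ?T' = "T(r := (T r)(row_len mu r := x))"
  have nc: "(r, row_len mu r) \<notin> cells mu" by (simp add: mem_cells_iff)
  have "tab_exp (add_box mu r) ?T' = Poly_Mapping.single x 1
    + (\<Sum>(i, j)\<in>cells mu. Poly_Mapping.single (?T' i j) 1)"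
    unfolding tab_exp_def cells_add_box[OF assms] by (subst sum.insert[OF finite_cells nc]) simp
  also have "(\<Sum>(i, j)\<in>cells mu. Poly_Mapping.single (?T' i j) 1) = tab_exp mu T"
    unfolding tab_exp_def by (rule sum.cong) (auto simp: mem_cells_iff)
  finally show ?thesis by (simp only: add.commute)
qed

lemma row_len_column: "row_len (replicate k (1::nat)) i = (if i < k then 1 else 0)"
  by (simp add: row_len_def)

lemma ssyt_column_iff:
  "C \<in> ssyt n (replicate k 1) \<longleftrightarrow> (\<forall>i j. (0 < j \<or> k \<le> i) \<longrightarrow> C i j = 0) \<and> (\<forall>i<k. C i 0 < n) \<and>
     (\<forall>i. Suc i < k \<longrightarrow> C i 0 < C (Suc i) 0)"
  unfolding ssyt_iff row_len_column by (auto simp: not_less)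

definition col_tail :: "tableau \<Rightarrow> nat \<Rightarrow> nat \<Rightarrow> nat" where
  "col_tail C = (\<lambda>i j. C (Suc i) j)"

lemma col_tail_ssyt: "C \<in> ssyt n (replicate (Suc k) 1) \<Longrightarrow> col_tail C \<in> ssyt n (replicate k 1)"
  unfolding ssyt_column_iff col_tail_def by auto

lemma tab_exp_column: "tab_exp (replicate k 1) C = (\<Sum>i<k. Poly_Mapping.single (C i 0) 1)"
proof -
  have "cells (replicate k 1) = (\<lambda>i. (i, 0)) ` {..<k}" by (auto simp: cells_def)
  then show ?thesis unfolding tab_exp_def by (simp add: sum.reindex inj_on_def)
qed

lemma tab_exp_column_Suc: "tab_exp (replicate (Suc k) 1) C = Poly_Mapping.single (C 0 0) 1
  + tab_exp (replicate k 1) (col_tail C)"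
  unfolding tab_exp_column col_tail_def by (subst sum.lessThan_Suc_shift) simp

section \<open>Row insertion\<close>

definition bumps :: "tableau \<Rightarrow> nat list \<Rightarrow> nat \<Rightarrow> nat \<Rightarrow> bool" where
  "bumps T mu x r \<longleftrightarrow> (\<exists>j < row_len mu r. x < T r j)"

definition bump_pos :: "tableau \<Rightarrow> nat list \<Rightarrow> nat \<Rightarrow> nat \<Rightarrow> nat" where
  "bump_pos T mu x r = (LEAST j. j < row_len mu r \<and> x < T r j)"

lemma bump_pos_spec: assumes "bumps T mu x r"
  shows "bump_pos T mu x r < row_len mu r" "x < T r (bump_pos T mu x r)"
    "\<And>j. j < bump_pos T mu x r \<Longrightarrow> T r j \<le> x"
proof -
  obtain j where "j < row_len mu r \<and> x < T r j" using assms by (auto simp: bumps_def)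
  then have "bump_pos T mu x r < row_len mu r \<and> x < T r (bump_pos T mu x r)"
    unfolding bump_pos_def by (rule LeastI)
  then show "bump_pos T mu x r < row_len mu r" "x < T r (bump_pos T mu x r)" by auto
  fix j assume "j < bump_pos T mu x r"
  then show "T r j \<le> x"
    using not_less_Least[of j "\<lambda>j. j < row_len mu r \<and> x < T r j"]
      \<open>bump_pos T mu x r < row_len mu r \<and> _\<close> unfolding bump_pos_def by auto
qed

lemma bump_pos_le: "j < row_len mu r \<Longrightarrow> x < T r j \<Longrightarrow> bump_pos T mu x r \<le> j"
  unfolding bump_pos_def by (rule Least_le) simp

lemma bumps_row_lt_length: "bumps T mu x r \<Longrightarrow> r < length mu"
  by (auto simp: bumps_def row_len_def split: if_splits)

function row_insert :: "tableau \<Rightarrow> nat list \<Rightarrow> nat \<Rightarrow> nat \<Rightarrow> tableau \<times> nat list \<times> nat" where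
  "row_insert T mu x r = (if bumps T mu x r then
      row_insert (T(r := (T r)(bump_pos T mu x r := x))) mu (T r (bump_pos T mu x r)) (Suc r)
    else (T(r := (T r)(row_len mu r := x)), add_box mu r, r))"
  by auto
termination
  by (relation "measure (\<lambda>(T, mu, x, r). length mu - r)") (auto dest: bumps_row_lt_length)

declare row_insert.simps[simp del]

lemma row_insert_bump:
  "bumps T mu x r \<Longrightarrow> row_insert T mu x r =
      row_insert (T(r := (T r)(bump_pos T mu x r := x))) mu (T r (bump_pos T mu x r)) (Suc r)"
  by (subst row_insert.simps) simp

lemma row_insert_append: "\<not> bumps T mu x r \<Longrightarrow> row_insert T mu x r
  = (T(r := (T r)(row_len mu r := x)), add_box mu r, r)"
  by (subst row_insert.simps) simp

lemma row_insert_basic: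
  "row_insert T mu x r = (W, lam, R) \<Longrightarrow> r \<le> length mu \<Longrightarrow>
    r \<le> R \<and> R \<le> length mu \<and> lam = add_box mu R \<and> (\<forall>i<r. W i = T i) \<and> (R = r \<longleftrightarrow> \<not> bumps T mu x r)"
proof (induction T mu x r arbitrary: W lam R rule: row_insert.induct)
  case (1 T mu x r)
  show ?case
  proof (cases "bumps T mu x r")
    case True
    have rl: "r < length mu" using True by (rule bumps_row_lt_length)
    have e: "row_insert (T(r := (T r)(bump_pos T mu x r := x))) mu (T r (bump_pos T mu x r)) (Suc r)
      = (W, lam, R)"
      using 1(2) row_insert_bump[OF True] by simp
    have IH: "Suc r \<le> R \<and> R \<le> length mu \<and> lam = add_box mu R \<and>
       (\<forall>i<Suc r. W i = (T(r := (T r)(bump_pos T mu x r := x))) i)"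
      using 1(1)[OF True e] rl by simp
    then show ?thesis using True by auto
  next
    case False
    with 1(2,3) show ?thesis by (auto simp: row_insert_append)
  qed
qed

text \<open>The invariant of row insertion when x enters row r > 0: x was bumped out of some
  column q of row r-1, so it exceeds the entries of row r-1 up to column q and lies below the
  entry of row r in column q (if any).\<close>

definition insertable :: "tableau \<Rightarrow> nat list \<Rightarrow> nat \<Rightarrow> nat \<Rightarrow> bool" where
  "insertable T mu x r \<longleftrightarrow> (0 < r \<longrightarrow>
     (\<exists>q < row_len mu (r - 1). (\<forall>j\<le>q. T (r - 1) j < x) \<and> (q < row_len mu r \<longrightarrow> x < T r q)))"

lemma insertable_0 [simp]: "insertable T mu x 0"
  by (simp add: insertable_def)

lemma ssyt_bump:
  assumes T: "T \<in> ssyt n mu" and x: "x < n" and bump: "bumps T mu x r" and ins: "insertable T mu x r"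
  defines "p \<equiv> bump_pos T mu x r"
  shows "T(r := (T r)(p := x)) \<in> ssyt n mu" (is "?T' \<in> _")
    and "insertable (T(r := (T r)(p := x))) mu (T r p) (Suc r)"
proof -
  note ss = T[unfolded ssyt_iff]
  have p: "p < row_len mu r" and xy: "x < T r p" and left: "\<And>j. j < p \<Longrightarrow> T r j \<le> x"
    using bump_pos_spec[OF bump] unfolding p_def by auto
  have above: "T (r - 1) p < x" if r: "0 < r"
  proof -
    obtain q where q: "q < row_len mu (r - 1)" "\<forall>j\<le>q. T (r - 1) j < x" "q < row_len mu r
      \<longrightarrow> x < T r q"
      using ins r by (auto simp: insertable_def)
    have "p \<le> q"
      using q(3) bump_pos_le[of q mu r x T] p unfolding p_def by (cases "q < row_len mu r") auto
    then show ?thesis using q(2) by simp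
  qed
  show "?T' \<in> ssyt n mu"
    unfolding ssyt_iff
  proof (intro conjI allI impI)
    fix i j assume "row_len mu i \<le> j" then show "?T' i j = 0" using ss p by auto
  next
    fix i j assume "j < row_len mu i" then show "?T' i j < n" using ss x by auto
  next
    fix i j assume j: "Suc j < row_len mu i"
    have "x \<le> T r (Suc j)" if "i = r" "j = p"
      using ssyt_row_mono[OF T, of p "Suc j" r] j that xy by simp
    moreover have "T r j \<le> x" if "Suc j = p" using left that by simp
    ultimately show "?T' i j \<le> ?T' i (Suc j)" using ss j by auto
  next
    fix i j assume j: "j < row_len mu (Suc i)"
    have "T r p < T (Suc r) p" if "p < row_len mu (Suc r)" using ss that by blast
    then have "x < T (Suc r) p" if "p < row_len mu (Suc r)" using xy that
      by (blast intro: less_trans)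
    then show "?T' i j < ?T' (Suc i) j"
      using ss j xy above by (cases "i = r"; cases "Suc i = r \<and> j = p") auto
  qed
  show "insertable ?T' mu (T r p) (Suc r)"
    unfolding insertable_def
  proof (intro impI exI conjI allI)
    show "p < row_len mu (Suc r - 1)" using p by simp
    fix j assume "j \<le> p"
    then show "?T' (Suc r - 1) j < T r p"
      using left[of j] xy by (cases "j = p") auto
  next
    assume "p < row_len mu (Suc r)"
    then show "T r p < ?T' (Suc r) p" using ss by auto
  qed
qed

lemma ssyt_append_box:
  assumes T: "T \<in> ssyt n mu" and mu: "is_partition mu" and x: "x < n" and r: "r \<le> length mu"
    and no_bump: "\<not> bumps T mu x r" and ins: "insertable T mu x r"
  shows "T(r := (T r)(row_len mu r := x)) \<in> ssyt n (add_box mu r)" (is "?W \<in> _")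
    and "is_partition (add_box mu r)"
proof -
  note ss = T[unfolded ssyt_iff]
  have left: "\<And>j. j < row_len mu r \<Longrightarrow> T r j \<le> x" using no_bump by (auto simp: bumps_def)
  have above: "row_len mu r < row_len mu (r - 1) \<and> (\<forall>j\<le>row_len mu r. T (r - 1) j < x)" if r: "0 < r"
  proof -
    obtain q where q: "q < row_len mu (r - 1)" "\<forall>j\<le>q. T (r - 1) j < x" "q < row_len mu r
      \<longrightarrow> x < T r q"
      using ins r by (auto simp: insertable_def)
    have "row_len mu r \<le> q" using q(3) left[of q] by (cases "row_len mu r \<le> q") auto
    then show ?thesis using q by auto
  qed
  then show "is_partition (add_box mu r)" by (intro is_partition_add_box[OF mu r]) auto
  have rows: "\<And>i. row_len (add_box mu r) i = row_len mu i + (if i = r then 1 else 0)"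
    using r by (simp add: row_len_add_box)
  show "?W \<in> ssyt n (add_box mu r)"
    unfolding ssyt_iff
  proof (intro conjI allI impI)
    fix i j assume "row_len (add_box mu r) i \<le> j" then show "?W i j = 0" using ss rows[of i] by auto
  next
    fix i j assume "j < row_len (add_box mu r) i" then show "?W i j < n" using ss x rows[of i]
      by auto
  next
    fix i j assume "Suc j < row_len (add_box mu r) i"
    then show "?W i j \<le> ?W i (Suc j)" using ss left rows[of i] by (cases "i = r") auto
  next
    fix i j assume j: "j < row_len (add_box mu r) (Suc i)"
    have "j < row_len mu r" if "i = r"
      using j rows[of "Suc i"] partition_row_len_antimono[OF mu, of r "Suc r"] that by simp
    then show "?W i j < ?W (Suc i) j"
      using ss j above rows[of "Suc i"] by (cases "i = r"; cases "Suc i = r"; cases "j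
        = row_len mu r") auto
  qed
qed

lemma row_insert_ssyt:
  assumes "row_insert T mu x r = (W, lam, R)" "T \<in> ssyt n mu" "is_partition mu" "x < n"
    "r \<le> length mu" "insertable T mu x r"
  shows "W \<in> ssyt n lam \<and> is_partition lam \<and> tab_exp lam W = tab_exp mu T + Poly_Mapping.single x 1"
  using assms
proof (induction T mu x r arbitrary: W lam R rule: row_insert.induct)
  case (1 T mu x r)
  show ?case
  proof (cases "bumps T mu x r")
    case True
    define p where "p = bump_pos T mu x r"
    have "row_insert (T(r := (T r)(p := x))) mu (T r p) (Suc r) = (W, lam, R)"
      using 1(2) row_insert_bump[OF True] unfolding p_def by simp
    moreover have "T r p < n" "Suc r \<le> length mu"
      using 1(3) bump_pos_spec(1)[OF True] bumps_row_lt_length[OF True]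
      unfolding p_def by (auto simp: ssyt_iff)
    ultimately have "W \<in> ssyt n lam \<and> is_partition lam \<and>
        tab_exp lam W = tab_exp mu (T(r := (T r)(p := x))) + Poly_Mapping.single (T r p) 1"
      using 1(1)[OF True] ssyt_bump[OF 1(3,5) True 1(7)] 1(4) unfolding p_def by blast
    then show ?thesis
      using tab_exp_replace_entry[OF bump_pos_spec(1)[OF True]] unfolding p_def by simp
  next
    case False
    then have "W = T(r := (T r)(row_len mu r := x))" and "lam = add_box mu r"
      using 1(2) row_insert_append[OF False] by auto
    then show ?thesis using ssyt_append_box[OF 1(3-6) False 1(7)] tab_exp_add_box[OF 1(6)] by blast
  qed
qed

text \<open>The row bumping lemma in the form needed for column insertion: after inserting x, a further
  insertion of some x' < x ends in a strictly lower row, and of some x' \<ge> x in a weakly higher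
  row. The second insertion only looks at rows r and below, so W' need only agree with W there.\<close>

lemma row_insert_smaller_ends_below:
  assumes "row_insert V mu x r = (W, lam, R)" "x' < x" "\<forall>i\<ge>r. W' i = W i" "r \<le> length mu"
  shows "R < snd (snd (row_insert W' lam x' r))"
  using assms
proof (induction V mu x r arbitrary: W lam R W' x' rule: row_insert.induct)
  case (1 V mu x r)
  show ?case
  proof (cases "bumps V mu x r")
    case True
    define p where "p = bump_pos V mu x r"
    define y where "y = V r p"
    define V' where "V' = V(r := (V r)(p := x))"
    have pl: "p < row_len mu r" and xy: "x < y" and lft: "\<And>j. j < p \<Longrightarrow> V r j \<le> x"
      using bump_pos_spec[OF True] unfolding p_def y_def by auto
    have rl: "r < length mu" using True by (rule bumps_row_lt_length)
    have e: "row_insert V' mu y (Suc r) = (W, lam, R)"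
      using 1(2) row_insert_bump[OF True] unfolding V'_def y_def p_def by simp
    have b: "Suc r \<le> R \<and> R \<le> length mu \<and> lam = add_box mu R \<and> (\<forall>i<Suc r. W i = V' i)"
      using row_insert_basic[OF e] rl by simp
    have row_r: "row_len lam r = row_len mu r" using b by (simp add: row_len_add_box)
    have Wr: "W' r = (V r)(p := x)" using b 1(4) by (simp add: V'_def fun_upd_def)
    have cb: "bumps W' lam x' r" unfolding bumps_def using pl row_r Wr 1(3) by auto
    define p' where "p' = bump_pos W' lam x' r"
    define y' where "y' = W' r p'"
    have "p' \<le> p" unfolding p'_def by (rule bump_pos_le) (use pl row_r Wr 1(3) in auto)
    have yy: "y' < y"
    proof (cases "p' = p")
      case True then show ?thesis using Wr xy unfolding y'_def by simp
    next
      case False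
      then have "p' < p" using \<open>p' \<le> p\<close> by simp
      then show ?thesis using Wr lft[of p'] xy unfolding y'_def by simp
    qed
    have e2: "row_insert W' lam x' r = row_insert (W'(r := (W' r)(p' := x'))) lam y' (Suc r)"
      unfolding p'_def y'_def by (rule row_insert_bump[OF cb])
    have "R < snd (snd (row_insert (W'(r := (W' r)(p' := x'))) lam y' (Suc r)))"
      by (rule 1(1)[OF True, folded p_def, folded y_def, folded V'_def, OF e yy])
        (use 1(4) rl in auto)
    then show ?thesis using e2 by simp
  next
    case False
    have W: "W = V(r := (V r)(row_len mu r := x))" and lam: "lam = add_box mu r" and R: "R = r"
      using 1(2) row_insert_append[OF False] by auto
    have cb: "bumps W' lam x' r" unfolding bumps_def
      by (rule exI[of _ "row_len mu r"]) (use 1(3,4,5) in \<open>auto simp: W lam row_len_add_box\<close>)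
    have "length mu \<le> length lam" using 1(5) by (simp add: lam length_add_box)
    then have "r \<le> length lam" using 1(5) by simp
    obtain W2 lam2 R2 where e: "row_insert W' lam x' r = (W2, lam2, R2)"
      by (cases "row_insert W' lam x' r") auto
    have "r \<le> R2 \<and> (R2 = r \<longleftrightarrow> \<not> bumps W' lam x' r)"
      using row_insert_basic[OF e \<open>r \<le> length lam\<close>] by simp
    then show ?thesis using cb e R by auto
  qed
qed

lemma row_insert_larger_ends_weakly_above:
  assumes "row_insert V mu x r = (W, lam, R)" "x \<le> x'" "\<forall>i\<ge>r. W' i = W i" "r \<le> length mu"
    "\<forall>i\<ge>r. \<forall>j j'. j \<le> j' \<longrightarrow> j' < row_len mu i \<longrightarrow> V i j \<le> V i j'"
  shows "snd (snd (row_insert W' lam x' r)) \<le> R"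
  using assms
proof (induction V mu x r arbitrary: W lam R W' x' rule: row_insert.induct)
  case (1 V mu x r)
  show ?case
  proof (cases "bumps V mu x r")
    case True
    define p where "p = bump_pos V mu x r"
    define y where "y = V r p"
    define V' where "V' = V(r := (V r)(p := x))"
    have pl: "p < row_len mu r" and xy: "x < y" and lft: "\<And>j. j < p \<Longrightarrow> V r j \<le> x"
      using bump_pos_spec[OF True] unfolding p_def y_def by auto
    have rl: "r < length mu" using True by (rule bumps_row_lt_length)
    have e: "row_insert V' mu y (Suc r) = (W, lam, R)"
      using 1(2) row_insert_bump[OF True] unfolding V'_def y_def p_def by simp
    have b: "Suc r \<le> R \<and> R \<le> length mu \<and> lam = add_box mu R \<and> (\<forall>i<Suc r. W i = V' i)"
      using row_insert_basic[OF e] rl by simp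
    have row_r: "row_len lam r = row_len mu r" using b by (simp add: row_len_add_box)
    have Wr: "W' r = (V r)(p := x)" using b 1(4) by (simp add: V'_def fun_upd_def)
    show ?thesis
    proof (cases "bumps W' lam x' r")
      case False
      have "snd (snd (row_insert W' lam x' r)) = r" using row_insert_append[OF False] by simp
      then show ?thesis using b by simp
    next
      case cb: True
      define p' where "p' = bump_pos W' lam x' r"
      define y' where "y' = W' r p'"
      have p'l: "p' < row_len mu r" and x'y': "x' < y'" using bump_pos_spec[OF cb] row_r
        unfolding p'_def y'_def by auto
      have "p < p'"
      proof (rule ccontr)
        assume "\<not> p < p'"
        then have "W' r p' \<le> x" using Wr lft[of p'] by (cases "p' = p") auto
        then show False using x'y' 1(3) unfolding y'_def by simp
      qed
      then have yy: "y \<le> y'" using Wr 1(6) p'l unfolding y_def y'_def by auto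
      have e2: "row_insert W' lam x' r = row_insert (W'(r := (W' r)(p' := x'))) lam y' (Suc r)"
        unfolding p'_def y'_def by (rule row_insert_bump[OF cb])
      have "snd (snd (row_insert (W'(r := (W' r)(p' := x'))) lam y' (Suc r))) \<le> R"
        by (rule 1(1)[OF True, folded p_def, folded y_def, folded V'_def, OF e yy])
          (use 1(4,6) rl in \<open>auto simp: V'_def\<close>)
      then show ?thesis using e2 by simp
    qed
  next
    case False
    have W: "W = V(r := (V r)(row_len mu r := x))" and lam: "lam = add_box mu r" and R: "R = r"
      using 1(2) row_insert_append[OF False] by auto
    have nb: "\<And>j. j < row_len mu r \<Longrightarrow> V r j \<le> x" using False by (auto simp: bumps_def)
    have "\<not> bumps W' lam x' r"
      unfolding bumps_def
    proof
      assume "\<exists>j<row_len lam r. x' < W' r j"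
      then obtain j where j: "j < row_len lam r" "x' < W' r j" by auto
      then have "j \<le> row_len mu r" using 1(5) by (simp add: lam row_len_add_box)
      then have "W' r j \<le> x" using nb[of j] 1(4) by (cases "j = row_len mu r") (auto simp: W)
      then show False using j 1(3) by simp
    qed
    then show ?thesis using row_insert_append R by simp
  qed
qed

lemma update_entry_inj:
  assumes "T1(r := (T1 r)(p := x1)) = T2(r := (T2 r)(p := x2))" and "T1 r p = T2 r p"
  shows "T1 = T2 \<and> x1 = x2"
proof
  show "x1 = x2" using fun_cong[OF fun_cong[OF assms(1), of r], of p] by simp
  show "T1 = T2"
  proof (intro ext)
    fix i j show "T1 i j = T2 i j"
      using fun_cong[OF fun_cong[OF assms(1), of i], of j] assms(2) by (cases "i = r \<and> j
        = p") (auto split: if_splits)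
  qed
qed

lemma row_insert_inj:
  assumes "row_insert T1 mu x1 r = row_insert T2 mu x2 r"
    "\<forall>i j. row_len mu i \<le> j \<longrightarrow> T1 i j = 0" "\<forall>i j. row_len mu i \<le> j \<longrightarrow> T2 i j = 0"
    "\<forall>i\<ge>r. \<forall>j j'. j \<le> j' \<longrightarrow> j' < row_len mu i \<longrightarrow> T1 i j \<le> T1 i j'"
    "\<forall>i\<ge>r. \<forall>j j'. j \<le> j' \<longrightarrow> j' < row_len mu i \<longrightarrow> T2 i j \<le> T2 i j'"
    "r \<le> length mu"
  shows "T1 = T2 \<and> x1 = x2"
  using assms
proof (induction T1 mu x1 r arbitrary: T2 x2 rule: row_insert.induct)
  case (1 T1 mu x1 r)
  have rowr: "\<And>T x. snd (snd (row_insert T mu x r)) = r \<longleftrightarrow> \<not> bumps T mu x r"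
  proof -
    fix T x
    obtain W lam R where e: "row_insert T mu x r = (W, lam, R)"
      by (cases "row_insert T mu x r") auto
    show "snd (snd (row_insert T mu x r)) = r \<longleftrightarrow> \<not> bumps T mu x r"
      using row_insert_basic[OF e 1(7)] e by simp
  qed
  have same: "bumps T1 mu x1 r = bumps T2 mu x2 r" using rowr[of T1 x1] rowr[of T2 x2] 1(2) by metis
  show ?case
  proof (cases "bumps T1 mu x1 r")
    case False
    then have c2: "\<not> bumps T2 mu x2 r" using same by simp
    have "T1(r := (T1 r)(row_len mu r := x1)) = T2(r := (T2 r)(row_len mu r := x2))"
      using 1(2) row_insert_append[OF False] row_insert_append[OF c2] by simp
    then show ?thesis by (rule update_entry_inj) (use 1(3,4) in simp)
  next
    case True
    then have c2: "bumps T2 mu x2 r" using same by simp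
    define p1 where "p1 = bump_pos T1 mu x1 r"
    define p2 where "p2 = bump_pos T2 mu x2 r"
    define y1 where "y1 = T1 r p1"
    define y2 where "y2 = T2 r p2"
    define T1' where "T1' = T1(r := (T1 r)(p1 := x1))"
    define T2' where "T2' = T2(r := (T2 r)(p2 := x2))"
    have p1l: "p1 < row_len mu r" and xy1: "x1 < y1" using bump_pos_spec[OF True]
      unfolding p1_def y1_def by auto
    have p2l: "p2 < row_len mu r" and xy2: "x2 < y2" using bump_pos_spec[OF c2]
      unfolding p2_def y2_def by auto
    have rl: "r < length mu" using True by (rule bumps_row_lt_length)
    have e: "row_insert T1' mu y1 (Suc r) = row_insert T2' mu y2 (Suc r)"
      using 1(2) row_insert_bump[OF True] row_insert_bump[OF c2]
        unfolding T1'_def y1_def p1_def T2'_def y2_def p2_def by simp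
    have IH: "T1' = T2' \<and> y1 = y2"
      by (rule 1(1)[OF True, folded p1_def, folded y1_def, folded T1'_def, OF e])
        (use 1(3,4,5,6) rl p1l p2l in \<open>auto simp: T1'_def T2'_def\<close>)
    have m1: "T1 r p1 \<le> T1 r p2" if "p1 \<le> p2" using 1(5) that p2l by auto
    have m2: "T2 r p2 \<le> T2 r p1" if "p2 \<le> p1" using 1(6) that p1l by auto
    have "p1 = p2"
    proof (rule ccontr)
      assume "p1 \<noteq> p2"
      then consider "p1 < p2" | "p2 < p1" by linarith
      then show False
      proof cases
        case 1
        have "T1' r p2 = T1 r p2" using 1 unfolding T1'_def by simp
        moreover have "T2' r p2 = x2" unfolding T2'_def by simp
        ultimately show False using IH m1 1 xy2 unfolding y1_def y2_def by auto
      next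
        case 2
        have "T2' r p1 = T2 r p1" using 2 unfolding T2'_def by simp
        moreover have "T1' r p1 = x1" unfolding T1'_def by simp
        ultimately show False using IH m2 2 xy1 unfolding y1_def y2_def by auto
      qed
    qed
    then show ?thesis
      using IH by (intro update_entry_inj[of T1 r p1 x1 T2 x2])
        (simp_all add: T1'_def T2'_def y1_def y2_def)
  qed
qed

locale unbumping = corner +
  fixes n :: nat and U :: "nat \<Rightarrow> nat \<Rightarrow> nat"
  assumes U: "U \<in> ssyt n lam"
begin

abbreviation lam' :: "nat list" where "lam' \<equiv> remove_box lam R"

text \<open>Reverse row insertion, starting from the corner box in row R. In the state (V, z, r) the
  rows of V above r are those of U, and z, an entry of row r of U, is travelling upwards; it is
  smaller than the entries of V in row r from its own column on.\<close>

definition unbump_state :: "tableau \<Rightarrow> nat \<Rightarrow> nat \<Rightarrow> bool" where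
  "unbump_state V z r \<longleftrightarrow> V \<in> ssyt n lam' \<and> z < n \<and> (\<forall>i<r. V i = U i) \<and>
     (\<exists>q < row_len lam r. z = U r q \<and> (\<forall>j. q \<le> j \<longrightarrow> j < row_len lam' r \<longrightarrow> z < V r j))"

definition unbump_pos :: "nat \<Rightarrow> nat \<Rightarrow> nat" where
  "unbump_pos z r = (GREATEST j. j < row_len lam r \<and> U r j < z)"

lemma unbump_pos_spec:
  assumes r: "r < R" and state: "unbump_state V z (Suc r)"
  defines "j \<equiv> unbump_pos z r"
  shows "j < row_len lam r" "U r j < z" "\<And>j'. j < j' \<Longrightarrow> j' < row_len lam r \<Longrightarrow> z \<le> U r j'"
    and "j < row_len lam' (Suc r) \<Longrightarrow> z < V (Suc r) j"
proof -
  let ?P = "\<lambda>j. j < row_len lam r \<and> U r j < z"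
  obtain q where q: "q < row_len lam (Suc r)" "z = U (Suc r) q"
    "\<forall>j. q \<le> j \<longrightarrow> j < row_len lam' (Suc r) \<longrightarrow> z < V (Suc r) j"
    using state by (auto simp: unbump_state_def)
  have "q < row_len lam r" using q(1) partition_row_len_antimono[OF part, of r "Suc r"] by simp
  then have Pq: "?P q" using q U by (auto simp: ssyt_iff)
  have bound: "\<And>y. ?P y \<Longrightarrow> y \<le> row_len lam r" by simp
  have "?P j" unfolding j_def unbump_pos_def by (rule GreatestI_nat[of ?P, OF Pq bound])
  then show "j < row_len lam r" "U r j < z" by auto
  have max: "\<And>j'. ?P j' \<Longrightarrow> j' \<le> j" unfolding j_def unbump_pos_def
    by (rule Greatest_le_nat[OF _ bound])
  then show "\<And>j'. j < j' \<Longrightarrow> j' < row_len lam r \<Longrightarrow> z \<le> U r j'" by force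
  show "j < row_len lam' (Suc r) \<Longrightarrow> z < V (Suc r) j" using q(3) max[OF Pq] by simp
qed

lemma ssyt_unbump:
  assumes r: "r < R" and state: "unbump_state V z (Suc r)"
  defines "j \<equiv> unbump_pos z r"
  shows "V(r := (V r)(j := z)) \<in> ssyt n lam'" (is "?V' \<in> _")
proof -
  note j = unbump_pos_spec[OF r state, folded j_def]
  have V: "V \<in> ssyt n lam'" "z < n" "\<forall>i<Suc r. V i = U i" using state
    by (auto simp: unbump_state_def)
  note Vs = V(1)[unfolded ssyt_iff] and Us = U[unfolded ssyt_iff]
  have row_r: "row_len lam' r = row_len lam r" using r by (simp add: row_len_remove_box)
  show ?thesis
    unfolding ssyt_iff
  proof (intro conjI allI impI)
    fix i k assume "row_len lam' i \<le> k" then show "?V' i k = 0" using Vs j(1) row_r by auto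
  next
    fix i k assume "k < row_len lam' i" then show "?V' i k < n" using Vs V(2) by auto
  next
    fix i k assume k: "Suc k < row_len lam' i"
    have "z \<le> U r (Suc k)" if "i = r" "k = j" using j(3)[of "Suc k"] k row_r that by simp
    moreover have "U r k < z" if "i = r" "Suc k = j"
      using ssyt_row_mono[OF U, of k j r] j(1,2) that by simp
    ultimately show "?V' i k \<le> ?V' i (Suc k)" using Vs Us V(3) k row_r by (cases "i = r") auto
  next
    fix i k assume k: "k < row_len lam' (Suc i)"
    have "V (r - 1) j < z" if "0 < r"
    proof -
      have "U (r - 1) j < U r j" using ssyt_col_mono[OF U part, of "r - 1" r j] j(1) that by simp
      moreover have "V (r - 1) j = U (r - 1) j" using V(3) by simp
      ultimately show ?thesis using j(2) by simp
    qed
    then show "?V' i k < ?V' (Suc i) k"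
      using Vs k j(4) by (cases "i = r \<and> k = j"; cases "Suc i = r \<and> k = j") auto
  qed
qed

lemma unbump_step:
  assumes r: "r < R" and state: "unbump_state V z (Suc r)"
  shows "\<exists>V' z'. unbump_state V' z' r \<and> row_insert V' lam' z' r = row_insert V lam' z (Suc r)"
proof -
  define j where "j = unbump_pos z r"
  define V' where "V' = V(r := (V r)(j := z))"
  note j = unbump_pos_spec[OF r state, folded j_def]
  have V: "\<forall>i<Suc r. V i = U i" using state by (auto simp: unbump_state_def)
  have row_r: "row_len lam' r = row_len lam r" using r by (simp add: row_len_remove_box)
  have "unbump_state V' (U r j) r"
  proof -
    have "V' \<in> ssyt n lam'" unfolding V'_def j_def by (rule ssyt_unbump[OF r state])
    moreover have "U r j < n" using U j(1) by (auto simp: ssyt_iff)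
    moreover have "\<forall>i<r. V' i = U i" using V by (auto simp: V'_def)
    moreover have "U r j < V' r k" if "j \<le> k" "k < row_len lam' r" for k
    proof (cases "k = j")
      case False
      then have "z \<le> U r k" using j(3) that row_r by simp
      then show ?thesis using j(2) V False by (simp add: V'_def)
    qed (use j(2) in \<open>simp add: V'_def\<close>)
    ultimately show ?thesis unfolding unbump_state_def using j(1) by blast
  qed
  moreover have bump: "bumps V' lam' (U r j) r"
    unfolding bumps_def using j(1,2) row_r by (auto simp: V'_def intro!: exI[of _ j])
  have "bump_pos V' lam' (U r j) r = j"
  proof (rule antisym)
    show "bump_pos V' lam' (U r j) r \<le> j"
      by (rule bump_pos_le) (use j(1,2) row_r in \<open>auto simp: V'_def\<close>)
    show "j \<le> bump_pos V' lam' (U r j) r"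
    proof (rule ccontr)
      assume less: "\<not> j \<le> bump_pos V' lam' (U r j) r"
      then have "V' r (bump_pos V' lam' (U r j) r) \<le> U r j"
        using V ssyt_row_mono[OF U, of _ j r] j(1) by (simp add: V'_def)
      then show False using bump_pos_spec(2)[OF bump] by simp
    qed
  qed
  moreover have "V'(r := (V' r)(j := U r j)) = V" using V by (auto simp: V'_def fun_eq_iff)
  ultimately show ?thesis
    using row_insert_bump[OF bump] by (auto simp: V'_def)
qed

lemma unbump_start: "\<exists>V z. unbump_state V z R \<and> row_insert V lam' z R = (U, lam, R)"
proof -
  define c where "c = row_len lam R - 1"
  define V where "V = U(R := (U R)(c := 0))"
  have rows: "\<And>i. row_len lam' i = row_len lam i - (if i = R then 1 else 0)"
    by (rule row_len_remove_box)
  have c: "c < row_len lam R" "row_len lam' R = c" using pos by (auto simp: c_def rows)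
  note Us = U[unfolded ssyt_iff]
  have V_ssyt: "V \<in> ssyt n lam'"
    unfolding ssyt_iff
  proof (intro conjI allI impI)
    fix i j assume "row_len lam' i \<le> j"
    then show "V i j = 0" using Us c rows[of i] by (cases "i = R"; cases "j = c") (auto simp: V_def)
  next
    fix i j assume "j < row_len lam' i" then show "V i j < n" using Us rows[of i]
      by (auto simp: V_def c_def)
  next
    fix i j assume "Suc j < row_len lam' i"
    then show "V i j \<le> V i (Suc j)" using Us rows[of i] c by (auto simp: V_def split: if_splits)
  next
    fix i j assume j: "j < row_len lam' (Suc i)"
    moreover have "j \<noteq> c" if "i = R" using j that cor by (simp add: rows c_def)
    ultimately show "V i j < V (Suc i) j" using Us c rows[of "Suc i"]
      by (auto simp: V_def split: if_splits)
  qed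
  have "unbump_state V (U R c) R"
    unfolding unbump_state_def using V_ssyt Us c by (auto simp: V_def intro!: exI[of _ c])
  moreover have "\<not> bumps V lam' (U R c) R"
  proof
    assume "bumps V lam' (U R c) R"
    then obtain j where "j < c" "U R c < V R j" using c by (auto simp: bumps_def)
    moreover have "U R j \<le> U R c" using ssyt_row_mono[OF U, of j c R] \<open>j < c\<close> c by simp
    ultimately show False by (simp add: V_def)
  qed
  then have "row_insert V lam' (U R c) R = (V(R := (V R)(c := U R c)), add_box lam' R, R)"
    using row_insert_append c by simp
  moreover have "V(R := (V R)(c := U R c)) = U" by (auto simp: V_def fun_eq_iff)
  ultimately show ?thesis using add_box_remove_box by auto
qed

lemma unbump: "\<exists>U' x. U' \<in> ssyt n lam' \<and> x < n \<and> row_insert U' lam' x 0 = (U, lam, R)"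
proof -
  have "\<exists>U' x. U' \<in> ssyt n lam' \<and> x < n \<and> row_insert U' lam' x 0 = row_insert V lam' z r"
    if "r \<le> R" "unbump_state V z r" for r V z
    using that
  proof (induction r arbitrary: V z)
    case 0
    then show ?case by (auto simp: unbump_state_def)
  next
    case (Suc r)
    then obtain V' z' where "unbump_state V' z' r" "row_insert V' lam' z' r
      = row_insert V lam' z (Suc r)"
      using unbump_step by (meson Suc_le_lessD)
    then show ?case using Suc.IH Suc.prems(1) by fastforce
  qed
  then show ?thesis using unbump_start by fastforce
qed

end

lemma row_insert_reverse:
  assumes "U \<in> ssyt n lam" "corner lam R"
  shows "\<exists>U' x. U' \<in> ssyt n (remove_box lam R) \<and> x < n \<and> row_insert U' (remove_box lam R) x 0
    = (U, lam, R)"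
  using unbumping.unbump[of lam R n U] assms by (simp add: unbumping_def unbumping_axioms_def)

section \<open>The Pieri rule for a column\<close>

text \<open>The entries of the column are inserted from the largest to the smallest, so each new box
  lies strictly below the previous one and together they form a vertical strip.\<close>

fun insert_column :: "nat \<Rightarrow> tableau \<Rightarrow> nat list \<Rightarrow> tableau \<Rightarrow> tableau \<times> nat list \<times> nat" where
  "insert_column 0 T mu C = (T, mu, 0)"
| "insert_column (Suc k) T mu C
  = (case insert_column k T mu (col_tail C) of (U, lam, R) \<Rightarrow> row_insert U lam (C 0 0) 0)"

lemma insert_column_props:
  assumes "T \<in> ssyt n mu" "is_partition mu" "C \<in> ssyt n (replicate k 1)" "insert_column k T mu C
    = (U, lam, R)"
  shows "U \<in> ssyt n lam \<and> vertical_strip mu k lam \<and> tab_exp lam U = tab_exp mu T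
    + tab_exp (replicate k 1) C \<and>
    (0 < k \<longrightarrow> row_len lam R = Suc (row_len mu R) \<and> (\<forall>i>R. row_len lam i = row_len mu i) \<and>
       (\<exists>V nu. V \<in> ssyt n nu \<and> row_insert V nu (C 0 0) 0 = (U, lam, R)))"
  using assms(3,4)
proof (induction k arbitrary: C U lam R)
  case 0
  then show ?case using assms(1,2) by (auto simp: vertical_strip_def tab_exp_def cells_def)
next
  case (Suc k)
  obtain U' lam' R' where e': "insert_column k T mu (col_tail C) = (U', lam', R')"
    by (cases "insert_column k T mu (col_tail C)") auto
  have IH: "U' \<in> ssyt n lam' \<and> vertical_strip mu k lam' \<and> tab_exp lam' U' = tab_exp mu T
    + tab_exp (replicate k 1) (col_tail C) \<and>
    (0 < k \<longrightarrow> row_len lam' R' = Suc (row_len mu R') \<and> (\<forall>i>R'. row_len lam' i = row_len mu i) \<and>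
       (\<exists>V nu. V \<in> ssyt n nu \<and> row_insert V nu (col_tail C 0 0) 0 = (U', lam', R')))"
    by (rule Suc.IH[OF col_tail_ssyt[OF Suc.prems(1)] e'])
  have e: "row_insert U' lam' (C 0 0) 0 = (U, lam, R)" using Suc.prems(2) e' by simp
  have xn: "C 0 0 < n" using Suc.prems(1) unfolding ssyt_column_iff by auto
  have pl': "is_partition lam'" using IH by (simp add: vertical_strip_def)
  have I1: "U \<in> ssyt n lam \<and> is_partition lam \<and> tab_exp lam U = tab_exp lam' U'
    + Poly_Mapping.single (C 0 0) 1"
    by (rule row_insert_ssyt[OF e]) (use IH pl' xn in auto)
  have B: "R \<le> length lam' \<and> lam = add_box lam' R"
    using row_insert_basic[OF e] by simp
  have rows: "\<And>i. row_len lam i = row_len lam' i + (if i = R then 1 else 0)" using B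
    by (simp add: row_len_add_box)
  have RR: "\<forall>i\<ge>R. row_len lam' i = row_len mu i"
  proof (cases "k = 0")
    case True then show ?thesis using e' by simp
  next
    case False
    then obtain V nu where V: "row_insert V nu (col_tail C 0 0) 0 = (U', lam', R')"
      and b: "row_len lam' R' = Suc (row_len mu R')" "\<forall>i>R'. row_len lam' i = row_len mu i" using IH
        by auto
    have "C 0 0 < col_tail C 0 0" using Suc.prems(1) False unfolding ssyt_column_iff col_tail_def
      by auto
    then have "R' < snd (snd (row_insert U' lam' (C 0 0) 0))"
      by (intro row_insert_smaller_ends_below[OF V]) auto
    then have "R' < R" using e by simp
    then show ?thesis using b by auto
  qed
  have vertical_strip: "vertical_strip mu (Suc k) lam"
    unfolding vertical_strip_def
  proof (intro conjI allI)
    show "is_partition lam" using I1 by simp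
    fix i show "row_len mu i \<le> row_len lam i" "row_len lam i \<le> Suc (row_len mu i)"
      using IH RR[rule_format, of i] rows[of i] by (auto simp: vertical_strip_def)
  next
    show "sum_list lam = sum_list mu + Suc k"
      using sum_list_add_box[of R lam'] B IH by (simp add: vertical_strip_def)
  qed
  show ?case
  proof (intro conjI impI)
    show "U \<in> ssyt n lam" using I1 by simp
    show "vertical_strip mu (Suc k) lam" by (rule vertical_strip)
    show "tab_exp lam U = tab_exp mu T + tab_exp (replicate (Suc k) 1) C"
      using I1 IH tab_exp_column_Suc[of k C] by (simp add: ac_simps del: replicate_Suc)
    show "row_len lam R = Suc (row_len mu R)" using rows[of R] RR by simp
    show "\<forall>i>R. row_len lam i = row_len mu i" using rows RR by simp
    show "\<exists>V nu. V \<in> ssyt n nu \<and> row_insert V nu (C 0 0) 0 = (U, lam, R)" using IH e by blast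
  qed
qed

lemma insert_column_surj:
  assumes pm: "is_partition mu" and "vertical_strip mu k lam" "U \<in> ssyt n lam"
  shows "\<exists>T C R. T \<in> ssyt n mu \<and> C \<in> ssyt n (replicate k 1) \<and> insert_column k T mu C = (U, lam, R)"
  using assms(2,3)
proof (induction k arbitrary: lam U)
  case 0
  then have "lam = mu" using vertical_strip_0[OF pm] by simp
  moreover have "(\<lambda>_ _. 0) \<in> ssyt n (replicate 0 1)" unfolding ssyt_column_iff by simp
  ultimately show ?case using 0 by fastforce
next
  case (Suc k)
  obtain R where R: "row_len lam R = Suc (row_len mu R)" "\<forall>i>R. row_len lam i = row_len mu i"
    using vertical_strip_lowest_box[OF pm Suc.prems(1)] by blast
  note cv = vertical_strip_remove_box[OF pm Suc.prems(1) R]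
  define lam' where "lam' = remove_box lam R"
  obtain U' x where U': "U' \<in> ssyt n lam'" "x < n" "row_insert U' lam' x 0 = (U, lam, R)"
    using row_insert_reverse[OF Suc.prems(2) cv(1)] unfolding lam'_def by blast
  obtain T C' R' where TC: "T \<in> ssyt n mu" "C' \<in> ssyt n (replicate k 1)" "insert_column k T mu C'
    = (U', lam', R')"
    using Suc.IH[OF cv(2)[folded lam'_def] U'(1)] by blast
  have rows_below: "\<forall>i\<ge>R. row_len lam' i = row_len mu i"
    using R unfolding lam'_def by (auto simp: corner.row_len_remove_box[OF cv(1)])
  have xl: "x < C' 0 0" if "0 < k"
  proof (rule ccontr)
    assume "\<not> x < C' 0 0"
    then have le: "C' 0 0 \<le> x" by simp
    have P: "row_len lam' R' = Suc (row_len mu R') \<and> (\<exists>V nu. V \<in> ssyt n nu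
      \<and> row_insert V nu (C' 0 0) 0 = (U', lam', R'))"
      using insert_column_props[OF TC(1) pm TC(2,3)] that by blast
    then obtain V nu where V: "V \<in> ssyt n nu" "row_insert V nu (C' 0 0) 0 = (U', lam', R')" by blast
    have "snd (snd (row_insert U' lam' x 0)) \<le> R'"
      by (rule row_insert_larger_ends_weakly_above[OF V(2) le]) (use ssyt_row_mono[OF V(1)] in auto)
    then have "R \<le> R'" using U'(3) by simp
    then show False using rows_below P by auto
  qed
  define C where "C = (\<lambda>i (j::nat). if j = 0 then (case i of 0 \<Rightarrow> x | Suc i' \<Rightarrow> C' i' 0) else 0)"
  have sh: "col_tail C = C'"
    using TC(2) unfolding ssyt_column_iff by (auto simp: C_def col_tail_def fun_eq_iff)
  have Cs: "C \<in> ssyt n (replicate (Suc k) 1)"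
    unfolding ssyt_column_iff
  proof (intro conjI allI impI)
    fix i and j :: nat assume "0 < j \<or> Suc k \<le> i"
    then show "C i j = 0" using TC(2) unfolding ssyt_column_iff
      by (auto simp: C_def split: nat.splits)
  next
    fix i assume "i < Suc k" then show "C i 0 < n" using TC(2) U'(2) unfolding ssyt_column_iff
      by (auto simp: C_def split: nat.splits)
  next
    fix i assume "Suc i < Suc k" then show "C i 0 < C (Suc i) 0"
      using TC(2) xl unfolding ssyt_column_iff by (auto simp: C_def split: nat.splits)
  qed
  have "insert_column (Suc k) T mu C = (U, lam, R)" using TC(3) sh U'(3) by (simp add: C_def)
  then show ?case using TC(1) Cs by blast
qed

lemma insert_column_inj:
  assumes "T1 \<in> ssyt n mu" "T2 \<in> ssyt n mu" "is_partition mu"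
    "C1 \<in> ssyt n (replicate k 1)" "C2 \<in> ssyt n (replicate k 1)"
    "insert_column k T1 mu C1 = (U, lam, R1)" "insert_column k T2 mu C2 = (U, lam, R2)"
  shows "T1 = T2 \<and> C1 = C2"
  using assms(4-7)
proof (induction k arbitrary: C1 C2 U lam R1 R2)
  case 0
  then show ?case unfolding ssyt_column_iff by (auto simp: fun_eq_iff)
next
  case (Suc k)
  obtain U1 lam1 R1' where e1: "insert_column k T1 mu (col_tail C1) = (U1, lam1, R1')"
    by (cases "insert_column k T1 mu (col_tail C1)") auto
  obtain U2 lam2 R2' where e2: "insert_column k T2 mu (col_tail C2) = (U2, lam2, R2')"
    by (cases "insert_column k T2 mu (col_tail C2)") auto
  have i1: "row_insert U1 lam1 (C1 0 0) 0 = (U, lam, R1)" using Suc.prems(3) e1 by simp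
  have i2: "row_insert U2 lam2 (C2 0 0) 0 = (U, lam, R2)" using Suc.prems(4) e2 by simp
  have P1: "row_len lam R1 = Suc (row_len mu R1) \<and> (\<forall>i>R1. row_len lam i = row_len mu i)"
    using insert_column_props[OF assms(1,3) Suc.prems(1,3)] by simp
  have P2: "row_len lam R2 = Suc (row_len mu R2) \<and> (\<forall>i>R2. row_len lam i = row_len mu i)"
    using insert_column_props[OF assms(2,3) Suc.prems(2,4)] by simp
  have RR: "R1 = R2"
  proof (rule ccontr)
    assume "R1 \<noteq> R2"
    then consider "R1 < R2" | "R2 < R1" by linarith
    then show False by cases (use P1 P2 in auto)
  qed
  have Q1: "U1 \<in> ssyt n lam1 \<and> vertical_strip mu k lam1"
    using insert_column_props[OF assms(1,3) col_tail_ssyt[OF Suc.prems(1)] e1] by simp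
  have Q2: "U2 \<in> ssyt n lam2 \<and> vertical_strip mu k lam2"
    using insert_column_props[OF assms(2,3) col_tail_ssyt[OF Suc.prems(2)] e2] by simp
  have b1: "R1 \<le> length lam1 \<and> lam = add_box lam1 R1" using row_insert_basic[OF i1] by simp
  have b2: "R2 \<le> length lam2 \<and> lam = add_box lam2 R2" using row_insert_basic[OF i2] by simp
  have "lam1 = lam2"
  proof (rule partition_eqI)
    show "is_partition lam1" "is_partition lam2" using Q1 Q2 by (auto simp: vertical_strip_def)
    fix i
    have "row_len lam i = row_len lam1 i + (if i = R1 then 1 else 0)" using b1
      by (simp add: row_len_add_box)
    moreover have "row_len lam i = row_len lam2 i + (if i = R2 then 1 else 0)" using b2
      by (simp add: row_len_add_box)
    ultimately show "row_len lam1 i = row_len lam2 i" using RR by simp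
  qed
  then have "U1 = U2 \<and> C1 0 0 = C2 0 0"
    using i1 i2 RR Q1 Q2
    by (intro row_insert_inj[of U1 lam1 "C1 0 0" 0 U2 "C2 0 0"])
       (auto simp: ssyt_iff intro: ssyt_row_mono)
  then have IH: "T1 = T2 \<and> col_tail C1 = col_tail C2"
    using Suc.IH[OF col_tail_ssyt[OF Suc.prems(1)] col_tail_ssyt[OF Suc.prems(2)] e1] e2 \<open>lam1
      = lam2\<close> by simp
  have "C1 = C2"
  proof (intro ext)
    fix i j show "C1 i j = C2 i j"
    proof (cases "j = 0")
      case False then show ?thesis using Suc.prems(1,2) unfolding ssyt_column_iff by auto
    next
      case True
      show ?thesis
      proof (cases i)
        case 0 then show ?thesis using True \<open>U1 = U2 \<and> C1 0 0 = C2 0 0\<close> by simp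
      next
        case (Suc i')
        have "col_tail C1 i' 0 = col_tail C2 i' 0" using IH by simp
        then show ?thesis using True Suc by (simp add: col_tail_def)
      qed
    qed
  qed
  then show ?case using IH by simp
qed

lemma insert_column_bij:
  assumes pm: "is_partition mu"
  shows "bij_betw (\<lambda>(T, C). (fst (snd (insert_column k T mu C)), fst (insert_column k T mu C)))
    (ssyt n mu \<times> ssyt n (replicate k 1)) (SIGMA lam:{lam. vertical_strip mu k lam}. ssyt n lam)"
    (is "bij_betw ?h ?A ?B")
  unfolding bij_betw_def
proof (intro conjI)
  show "inj_on ?h ?A"
  proof (rule inj_onI)
    fix x y assume xy: "x \<in> ?A" "y \<in> ?A" "?h x = ?h y"
    obtain T1 C1 where x: "x = (T1, C1)" by (cases x) auto
    obtain T2 C2 where y: "y = (T2, C2)" by (cases y) auto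
    have a: "T1 \<in> ssyt n mu" "C1 \<in> ssyt n (replicate k 1)"
      "T2 \<in> ssyt n mu" "C2 \<in> ssyt n (replicate k 1)" using xy x y by auto
    obtain U1 lam1 R1 where e1: "insert_column k T1 mu C1 = (U1, lam1, R1)"
      by (cases "insert_column k T1 mu C1") auto
    obtain U2 lam2 R2 where e2: "insert_column k T2 mu C2 = (U2, lam2, R2)"
      by (cases "insert_column k T2 mu C2") auto
    have "insert_column k T2 mu C2 = (U1, lam1, R2)" using xy(3) x y e1 e2 by simp
    then show "x = y" unfolding x y using insert_column_inj[OF a(1,3) pm a(2,4) e1] by simp
  qed
next
  show "?h ` ?A = ?B"
  proof
    show "?h ` ?A \<subseteq> ?B"
    proof
      fix z assume "z \<in> ?h ` ?A"
      then obtain T C where a: "T \<in> ssyt n mu" "C \<in> ssyt n (replicate k 1)" and z: "z = ?h (T, C)"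
        by auto
      obtain U lam R where e: "insert_column k T mu C = (U, lam, R)"
        by (cases "insert_column k T mu C") auto
      show "z \<in> ?B" using insert_column_props[OF a(1) pm a(2) e] e z by simp
    qed
  next
    show "?B \<subseteq> ?h ` ?A"
    proof
      fix z assume "z \<in> ?B"
      then obtain lam U where a: "vertical_strip mu k lam" "U \<in> ssyt n lam" and z: "z = (lam, U)"
        by auto
      obtain T C R where "T \<in> ssyt n mu" "C \<in> ssyt n (replicate k 1)" "insert_column k T mu C
        = (U, lam, R)"
        using insert_column_surj[OF pm a] by blast
      then show "z \<in> ?h ` ?A" unfolding z by (intro image_eqI[of _ _ "(T, C)"]) auto
    qed
  qed
qed

lemma schur_mult_column:
  assumes pm: "is_partition mu"
  shows "schur n mu * schur n (replicate k 1) = (\<Sum>lam\<in>{lam. vertical_strip mu k lam}. schur n lam)"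
proof -
  let ?A = "ssyt n mu \<times> ssyt n (replicate k 1)"
  let ?B = "SIGMA lam:{lam. vertical_strip mu k lam}. ssyt n lam"
  let ?h = "\<lambda>(T, C). (fst (snd (insert_column k T mu C)), fst (insert_column k T mu C))"
  have "schur n mu * schur n (replicate k 1) =
      (\<Sum>T\<in>ssyt n mu. \<Sum>C\<in>ssyt n (replicate k 1). Poly_Mapping.single (tab_exp mu T
        + tab_exp (replicate k 1) C) 1)"
    unfolding schur_def sum_product by (simp add: mult_single)
  also have "\<dots> = (\<Sum>(T, C)\<in>?A. Poly_Mapping.single (tab_exp mu T + tab_exp (replicate k 1) C) 1)"
    by (rule sum.cartesian_product)
  also have "\<dots> =
      (\<Sum>x\<in>?A. (case ?h x of (lam, U) \<Rightarrow> Poly_Mapping.single (tab_exp lam U) 1))"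
  proof (rule sum.cong[OF refl])
    fix x assume "x \<in> ?A"
    then obtain T C where a: "T \<in> ssyt n mu" "C \<in> ssyt n (replicate k 1)" and x: "x = (T, C)"
      by auto
    obtain U lam R where e: "insert_column k T mu C = (U, lam, R)"
      by (cases "insert_column k T mu C") auto
    show "(case x of (T, C) \<Rightarrow> Poly_Mapping.single (tab_exp mu T + tab_exp (replicate k 1) C) 1) =
      (case ?h x of (lam, U) \<Rightarrow> Poly_Mapping.single (tab_exp lam U) 1)"
      using insert_column_props[OF a(1) pm a(2) e] e x by simp
  qed
  also have "\<dots> = (\<Sum>(lam, U)\<in>?B. Poly_Mapping.single (tab_exp lam U) 1)"
    by (rule sum.reindex_bij_betw[OF insert_column_bij[OF pm]])
  also have "\<dots> = (\<Sum>lam\<in>{lam. vertical_strip mu k lam}.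
      \<Sum>U\<in>ssyt n lam. Poly_Mapping.single (tab_exp lam U) 1)"
    by (rule sum.Sigma[symmetric]) (auto simp: finite_vertical_strips finite_ssyt)
  also have "\<dots> = (\<Sum>lam\<in>{lam. vertical_strip mu k lam}. schur n lam)" by (simp add: schur_def)
  finally show ?thesis .
qed

section \<open>Linear independence of Schur polynomials\<close>

lemma lookup_of_int_mult: "Poly_Mapping.lookup (of_int c * (p :: ipoly)) k
  = c * Poly_Mapping.lookup p k"
proof -
  have "(of_int c :: ipoly) = Poly_Mapping.single 0 c"
    by (metis single_of_int id_apply of_int_eq_id)
  then have "of_int c * p = Poly_Mapping.single 0 c * p" by simp
  also have "\<dots> = Poly_Mapping.map ((*) c) p" by (rule mult_map_scale_conv_mult[symmetric])
  finally show ?thesis by (simp add: map.rep_eq when_def)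
qed

lemma lookup_tab_exp:
  "Poly_Mapping.lookup (tab_exp lam T) v = (\<Sum>c\<in>cells lam. if T (fst c) (snd c)
    = v then (1::nat) else 0)"
  unfolding tab_exp_def Poly_Mapping.lookup_sum
  by (intro sum.cong refl) (auto simp: lookup_single when_def split: prod.splits)

lemma sum_lookup_tab_exp_le:
  assumes T: "T \<in> ssyt n lam" and pl: "is_partition lam"
  shows "(\<Sum>v<k. Poly_Mapping.lookup (tab_exp lam T) v) \<le> (\<Sum>i<k. row_len lam i)"
proof -
  have "(\<Sum>v<k. Poly_Mapping.lookup (tab_exp lam T) v) = (\<Sum>c\<in>cells lam. \<Sum>v<k. if T (fst c) (snd c)
    = v then 1 else 0)"
    unfolding lookup_tab_exp by (rule sum.swap)
  also have "\<dots> = (\<Sum>c\<in>cells lam. if T (fst c) (snd c) < k then 1 else 0)"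
    by (intro sum.cong refl) (simp add: sum.delta' [of "{..<k}"])
  also have "\<dots> \<le> (\<Sum>c\<in>cells lam. if fst c < k then 1 else 0)"
  proof (rule sum_mono)
    fix c assume "c \<in> cells lam"
    then have "fst c \<le> T (fst c) (snd c)" using ssyt_row_index_le[OF T pl]
      by (cases c) (auto simp: mem_cells_iff)
    then show "(if T (fst c) (snd c) < k then 1 else 0) \<le> (if fst c < k then 1 else (0::nat))"
      by auto
  qed
  also have "\<dots> = card {c \<in> cells lam. fst c < k}"
    by (simp add: sum.inter_filter[symmetric] finite_cells)
  also have "{c \<in> cells lam. fst c < k} = Sigma {..<k} (\<lambda>i. {..<row_len lam i})"
    by (auto simp: mem_cells_iff)
  also have "card \<dots> = (\<Sum>i<k. row_len lam i)" by simp
  finally show ?thesis .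
qed

definition superstandard :: "nat list \<Rightarrow> nat \<Rightarrow> nat \<Rightarrow> nat" where
  "superstandard lam = (\<lambda>i j. if j < row_len lam i then i else 0)"

lemma superstandard_ssyt:
  assumes pl: "is_partition lam" and ln: "length lam \<le> n"
  shows "superstandard lam \<in> ssyt n lam"
  unfolding ssyt_iff superstandard_def
proof (intro conjI allI impI)
  fix i j assume "j < row_len lam i"
  then have "i < length lam" using partition_row_len_pos_iff[OF pl, of i] by simp
  then show "(if j < row_len lam i then i else 0) < n" using ln by simp
next
  fix i j assume "j < row_len lam (Suc i)"
  moreover have "row_len lam (Suc i) \<le> row_len lam i"
    by (rule partition_row_len_antimono[OF pl]) simp
  ultimately show "(if j < row_len lam i then i else 0) < (if j < row_len lam (Suc i) then Suc i else 0)"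
    by simp
qed auto

lemma lookup_tab_exp_superstandard: "Poly_Mapping.lookup (tab_exp lam (superstandard lam)) v
  = row_len lam v"
proof -
  have "Poly_Mapping.lookup (tab_exp lam (superstandard lam)) v
    = card {c \<in> cells lam. superstandard lam (fst c) (snd c) = v}"
    unfolding lookup_tab_exp by (simp add: sum.inter_filter[symmetric] finite_cells)
  also have "{c \<in> cells lam. superstandard lam (fst c) (snd c) = v} = {v} \<times> {..<row_len lam v}"
    by (auto simp: mem_cells_iff superstandard_def)
  finally show ?thesis by simp
qed

definition row_sum :: "nat list \<Rightarrow> nat \<Rightarrow> nat" where "row_sum lam k = (\<Sum>i<k. row_len lam i)"

definition dominance_weight :: "nat \<Rightarrow> nat list \<Rightarrow> nat" where "dominance_weight n lam
  = (\<Sum>k\<le>n. row_sum lam k)"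

lemma lookup_schur:
  "Poly_Mapping.lookup (schur n lam) e = int (card {T \<in> ssyt n lam. tab_exp lam T = e})"
proof -
  have "Poly_Mapping.lookup (schur n lam) e = (\<Sum>T\<in>ssyt n lam. if tab_exp lam T = e then 1 else 0)"
    unfolding schur_def Poly_Mapping.lookup_sum
      by (intro sum.cong refl) (auto simp: lookup_single when_def)
  also have "\<dots> = int (card {T \<in> ssyt n lam. tab_exp lam T = e})"
    by (simp add: sum.inter_filter[symmetric] finite_ssyt)
  finally show ?thesis .
qed

lemma row_sum_le_if_same_content:
  assumes "is_partition lam" "T \<in> ssyt n lam" "tab_exp lam T = tab_exp mu (superstandard mu)"
  shows "row_sum mu k \<le> row_sum lam k"
proof -
  have "row_sum mu k = (\<Sum>v<k. Poly_Mapping.lookup (tab_exp mu (superstandard mu)) v)"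
    by (simp add: row_sum_def lookup_tab_exp_superstandard)
  also have "\<dots> = (\<Sum>v<k. Poly_Mapping.lookup (tab_exp lam T) v)" using assms(3) by simp
  also have "\<dots> \<le> row_sum lam k" unfolding row_sum_def by (rule sum_lookup_tab_exp_le[OF assms(2,1)])
  finally show ?thesis .
qed

lemma row_sum_inj:
  assumes "is_partition a" "is_partition b" "length a \<le> n" "length b \<le> n" "\<forall>k\<le>n. row_sum a k
    = row_sum b k"
  shows "a = b"
proof (rule partition_eqI[OF assms(1,2)])
  fix i show "row_len a i = row_len b i"
  proof (cases "i < n")
    case True
    have "row_sum a (Suc i) = row_sum b (Suc i)" "row_sum a i = row_sum b i" using assms(5) True
      by auto
    then show ?thesis by (simp add: row_sum_def)
  next
    case False then show ?thesis using assms(3,4) by (simp add: row_len_def)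
  qed
qed

lemma dominance_weight_less:
  assumes "is_partition a" "is_partition b" "length a \<le> n" "length b \<le> n"
    and "\<forall>k. row_sum a k \<le> row_sum b k" "a \<noteq> b"
  shows "dominance_weight n a < dominance_weight n b"
proof -
  obtain k where "k \<le> n" "row_sum a k \<noteq> row_sum b k" using row_sum_inj[OF assms(1-4)] assms(6)
    by blast
  then have "\<exists>k\<in>{..n}. row_sum a k < row_sum b k" using assms(5)[rule_format, of k]
    by (intro bexI[of _ k]) auto
  then show ?thesis unfolding dominance_weight_def using assms(5)
    by (intro sum_strict_mono_ex1) auto
qed

lemma lookup_schur_superstandard_eq_0:
  assumes lam: "is_partition lam" "length lam \<le> n" and mu: "is_partition mu" "length mu \<le> n"
    and weight: "dominance_weight n lam \<le> dominance_weight n mu" and "lam \<noteq> mu"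
  shows "Poly_Mapping.lookup (schur n lam) (tab_exp mu (superstandard mu)) = 0"
proof -
  have "{T \<in> ssyt n lam. tab_exp lam T = tab_exp mu (superstandard mu)} = {}"
  proof (rule ccontr)
    assume "{T \<in> ssyt n lam. tab_exp lam T = tab_exp mu (superstandard mu)} \<noteq> {}"
    then obtain T where T: "T \<in> ssyt n lam" "tab_exp lam T = tab_exp mu (superstandard mu)" by auto
    have "\<forall>k. row_sum mu k \<le> row_sum lam k" using row_sum_le_if_same_content[OF lam(1) T] by blast
    then have "dominance_weight n mu < dominance_weight n lam"
      using dominance_weight_less[OF mu(1) lam(1) mu(2) lam(2)] \<open>lam \<noteq> mu\<close> by metis
    then show False using weight by simp
  qed
  then show ?thesis unfolding lookup_schur by (simp only:) simp
qed

lemma lookup_schur_superstandard_neq_0: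
  assumes "is_partition mu" "length mu \<le> n"
  shows "Poly_Mapping.lookup (schur n mu) (tab_exp mu (superstandard mu)) \<noteq> 0"
proof -
  have "card {T \<in> ssyt n mu. tab_exp mu T = tab_exp mu (superstandard mu)} \<noteq> 0"
    using superstandard_ssyt[OF assms] finite_ssyt[of n mu] by (subst card_0_eq) auto
  then show ?thesis by (simp add: lookup_schur)
qed

text \<open>The monomial of the superstandard tableau of a shape of maximal weight occurs in no
  other Schur polynomial of the family.\<close>

lemma schur_linear_independent:
  assumes fin: "finite F" and parts: "\<forall>lam\<in>F. is_partition lam \<and> length lam \<le> n"
    and zero: "(\<Sum>lam\<in>F. of_int (c lam) * schur n lam) = 0"
  shows "\<forall>lam\<in>F. c lam = 0"
proof (rule ccontr)
  assume "\<not> (\<forall>lam\<in>F. c lam = 0)"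
  define G where "G = {lam \<in> F. c lam \<noteq> 0}"
  have G: "finite G" "G \<noteq> {}" using fin \<open>\<not> _\<close> by (auto simp: G_def)
  then have "Max (dominance_weight n ` G) \<in> dominance_weight n ` G" by simp
  then obtain mu where mu: "mu \<in> G" "dominance_weight n mu = Max (dominance_weight n ` G)" by auto
  have max: "\<And>lam. lam \<in> G \<Longrightarrow> dominance_weight n lam \<le> dominance_weight n mu" using mu G by simp
  define e where "e = tab_exp mu (superstandard mu)"
  have mu_part: "is_partition mu" "length mu \<le> n" using mu parts by (auto simp: G_def)
  have others: "c lam * Poly_Mapping.lookup (schur n lam) e = 0" if "lam \<in> F - {mu}" for lam
  proof (cases "c lam = 0")
    case False
    then have "lam \<in> G" using that by (simp add: G_def)
    moreover have "is_partition lam" "length lam \<le> n" "lam \<noteq> mu" using that parts by auto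
    ultimately show ?thesis
      using lookup_schur_superstandard_eq_0[OF _ _ mu_part max] unfolding e_def by simp
  qed simp
  have "0 = Poly_Mapping.lookup (\<Sum>lam\<in>F. of_int (c lam) * schur n lam) e" using zero by simp
  also have "\<dots> = (\<Sum>lam\<in>F. c lam * Poly_Mapping.lookup (schur n lam) e)"
    by (simp add: Poly_Mapping.lookup_sum lookup_of_int_mult)
  also have "\<dots> = c mu * Poly_Mapping.lookup (schur n mu) e +
      (\<Sum>lam\<in>F - {mu}. c lam * Poly_Mapping.lookup (schur n lam) e)"
    using mu fin by (intro sum.remove) (auto simp: G_def)
  also have "(\<Sum>lam\<in>F - {mu}. c lam * Poly_Mapping.lookup (schur n lam) e) = 0"
    using others by (intro sum.neutral) blast
  finally show False
    using mu(1) lookup_schur_superstandard_neq_0[OF mu_part] unfolding e_def by (simp add: G_def)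
qed

lemma schur_expansion_unique:
  assumes "schur_expansion n f c1" "schur_expansion n f c2"
  shows "c1 = c2"
proof -
  define F where "F = {lam. c1 lam \<noteq> 0} \<union> {lam. c2 lam \<noteq> 0}"
  have fF: "finite F" using assms by (simp add: F_def schur_expansion_def)
  have parts: "\<forall>lam\<in>F. is_partition lam \<and> length lam \<le> n" using assms
    by (auto simp: F_def schur_expansion_def)
  have e1: "f = (\<Sum>lam\<in>F. of_int (c1 lam) * schur n lam)"
    using assms(1) fF unfolding schur_expansion_def
    by (auto intro!: sum.mono_neutral_left simp: F_def)
  have e2: "f = (\<Sum>lam\<in>F. of_int (c2 lam) * schur n lam)"
    using assms(2) fF unfolding schur_expansion_def
    by (auto intro!: sum.mono_neutral_left simp: F_def)
  have "(\<Sum>lam\<in>F. of_int (c1 lam - c2 lam) * schur n lam) =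
     (\<Sum>lam\<in>F. of_int (c1 lam) * schur n lam - of_int (c2 lam) * schur n lam)"
    by (intro sum.cong refl) (simp only: of_int_diff left_diff_distrib)
  also have "\<dots> = 0" unfolding sum_subtractf e1[symmetric] e2[symmetric] by simp
  finally have "(\<Sum>lam\<in>F. of_int (c1 lam - c2 lam) * schur n lam) = 0" .
  then have "\<forall>lam\<in>F. c1 lam - c2 lam = 0" by (rule schur_linear_independent[OF fF parts])
  then show ?thesis
  proof (intro ext)
    fix lam assume h: "\<forall>lam\<in>F. c1 lam - c2 lam = 0"
    show "c1 lam = c2 lam"
    proof (cases "lam \<in> F")
      case True then show ?thesis using h by simp
    next
      case False then show ?thesis unfolding F_def by simp
    qed
  qed
qed

lemma Cop_eq_sum_adapted:
  assumes "schur_expansion n f c"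
  shows "Cop m n f = (\<Sum>lam | c lam \<noteq> 0 \<and> adapted m lam. of_int (c lam) * schur n lam)"
proof -
  have "(THE c. schur_expansion n f c) = c"
    using assms schur_expansion_unique by blast
  then show ?thesis by (simp add: Cop_def)
qed

lemma schur_eq_0_if_too_long: "is_partition lam \<Longrightarrow> n < length lam \<Longrightarrow> schur n lam = 0"
  by (simp add: schur_def ssyt_empty_if_too_long)

lemma schur_mult_column_sum:
  assumes "is_partition mu" "finite L" "{lam. vertical_strip mu k lam} \<subseteq> L"
  shows "schur n mu * schur n (replicate k 1)
    = (\<Sum>lam\<in>L. if vertical_strip mu k lam then schur n lam else 0)"
proof -
  have "(\<Sum>lam\<in>L. if vertical_strip mu k lam then schur n lam else 0) =
      (\<Sum>lam\<in>{lam \<in> L. vertical_strip mu k lam}. schur n lam)"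
    by (simp add: sum.inter_filter[OF assms(2)])
  also have "{lam \<in> L. vertical_strip mu k lam} = {lam. vertical_strip mu k lam}" using assms(3)
    by auto
  finally show ?thesis using schur_mult_column[OF assms(1)] by simp
qed

lemma schur_expansion_mult_column:
  assumes ex: "schur_expansion n g c"
  shows "schur_expansion n (g * schur n (replicate k 1))
    (\<lambda>lam. if is_partition lam
      \<and> length lam \<le> n then (\<Sum>mu | c mu \<noteq> 0. if vertical_strip mu k lam then c mu else 0) else 0)"
    (is "schur_expansion n _ ?c'")
proof -
  define S where "S = {mu. c mu \<noteq> 0}"
  have fS: "finite S" and pS: "\<forall>mu\<in>S. is_partition mu \<and> length mu \<le> n"
    and g: "g = (\<Sum>mu\<in>S. of_int (c mu) * schur n mu)"
    using ex by (auto simp: schur_expansion_def S_def)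
  define L where "L = (\<Union>mu\<in>S. {lam. vertical_strip mu k lam})"
  have fL: "finite L" unfolding L_def using fS finite_vertical_strips by blast
  have supp: "{lam. ?c' lam \<noteq> 0} \<subseteq> L"
  proof
    fix lam assume h: "lam \<in> {lam. ?c' lam \<noteq> 0}"
    show "lam \<in> L"
    proof (rule ccontr)
      assume "lam \<notin> L"
      then have "\<forall>mu\<in>S. \<not> vertical_strip mu k lam" by (auto simp: L_def)
      then have "(\<Sum>mu\<in>S. if vertical_strip mu k lam then c mu else 0) = 0"
        by (intro sum.neutral) simp
      then have "?c' lam = 0" unfolding S_def by simp
      then show False using h by simp
    qed
  qed
  have "g * schur n (replicate k 1)
    = (\<Sum>mu\<in>S. of_int (c mu) * (schur n mu * schur n (replicate k 1)))"
    unfolding g by (simp add: sum_distrib_right mult.assoc)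
  also have "\<dots> = (\<Sum>mu\<in>S. \<Sum>lam\<in>L. of_int (if vertical_strip mu k lam then c mu else 0) * schur n lam)"
  proof (rule sum.cong[OF refl])
    fix mu assume mu: "mu \<in> S"
    then have "schur n mu * schur n (replicate k 1)
      = (\<Sum>lam\<in>L. if vertical_strip mu k lam then schur n lam else 0)"
      using pS fL by (intro schur_mult_column_sum) (auto simp: L_def)
    then show "of_int (c mu) * (schur n mu * schur n (replicate k 1)) =
        (\<Sum>lam\<in>L. of_int (if vertical_strip mu k lam then c mu else 0) * schur n lam)"
      by (simp add: sum_distrib_left) (intro sum.cong; simp)
  qed
  also have "\<dots> = (\<Sum>lam\<in>L. \<Sum>mu\<in>S. of_int (if vertical_strip mu k lam then c mu else 0) * schur n lam)"
    by (rule sum.swap)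
  also have "\<dots> = (\<Sum>lam\<in>L. of_int (?c' lam) * schur n lam)"
  proof (rule sum.cong[OF refl])
    fix lam assume lam: "lam \<in> L"
    then have pl: "is_partition lam" by (auto simp: L_def vertical_strip_def)
    show "(\<Sum>mu\<in>S. of_int (if vertical_strip mu k lam then c mu else 0) * schur n lam)
      = of_int (?c' lam) * schur n lam"
    proof (cases "length lam \<le> n")
      case True
      then show ?thesis using pl by (simp add: sum_distrib_right[symmetric] S_def)
    next
      case False
      then show ?thesis using pl schur_eq_0_if_too_long[of lam n] by simp
    qed
  qed
  also have "\<dots> = (\<Sum>lam | ?c' lam \<noteq> 0. of_int (?c' lam) * schur n lam)"
    using supp fL by (intro sum.mono_neutral_right) auto
  finally have eq: "g * schur n (replicate k 1)
    = (\<Sum>lam | ?c' lam \<noteq> 0. of_int (?c' lam) * schur n lam)" .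
  have A: "\<forall>lam. ?c' lam \<noteq> 0 \<longrightarrow> is_partition lam \<and> length lam \<le> n"
    by (intro allI impI) (simp split: if_splits)
  have B: "finite {lam. ?c' lam \<noteq> 0}" using supp fL by (rule finite_subset)
  show ?thesis unfolding schur_expansion_def using A B eq by blast
qed

section \<open>The operator C_m on a product of columns\<close>

lemma adapted_iff_row_len:
  "adapted m lam \<longleftrightarrow> (\<forall>k<length lam. int m - int (Suc k) < int (row_len lam k))"
  by (simp add: adapted_def row_len_def)

lemma adapted_of_vertical_strip:
  assumes mu: "is_partition mu" and strip: "vertical_strip mu k lam" and ad: "adapted (Suc m) lam"
  shows "adapted m mu"
  unfolding adapted_iff_row_len
proof (intro allI impI)
  fix i assume "i < length mu"
  then have "0 < row_len mu i" using partition_row_len_pos_iff[OF mu] by simp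
  then have "0 < row_len lam i" using strip by (simp add: vertical_strip_def) (metis less_le_trans)
  then have "i < length lam" using partition_row_len_pos_iff strip by (simp add: vertical_strip_def)
  then have "int (Suc m) - int (Suc i) < int (row_len lam i)" using ad
    by (simp add: adapted_iff_row_len)
  moreover have "row_len lam i \<le> Suc (row_len mu i)" using strip by (simp add: vertical_strip_def)
  ultimately show "int m - int (Suc i) < int (row_len mu i)" by linarith
qed

text \<open>In an (m+1)-adapted shape the rows 1, ..., m-1 (counting from 0) of a staircase must all
  grow, which uses up the whole strip.\<close>

lemma adapted_vertical_strip_fills_rows:
  assumes m: "2 \<le> m" and g: "\<forall>i. 1 \<le> i \<and> i \<le> m - 1 \<longrightarrow> row_len g i = m - i"
    and ad: "adapted (Suc m) lam" and strip: "vertical_strip g (m - 1) lam"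
  shows "row_len lam i = row_len g i + (if 1 \<le> i \<and> i \<le> m - 1 then 1 else 0)"
proof -
  have lam: "is_partition lam" using strip by (simp add: vertical_strip_def)
  have grow: "row_len lam i = Suc (row_len g i)" if "1 \<le> i" "i \<le> m - 1" for i
  proof -
    have "0 < row_len g i" using g that by simp
    then have "0 < row_len lam i" using strip
      by (simp add: vertical_strip_def) (metis less_le_trans)
    then have "i < length lam" using partition_row_len_pos_iff[OF lam] by simp
    then have "int (Suc m) - int (Suc i) < int (row_len lam i)" using ad
      by (simp add: adapted_iff_row_len)
    moreover have "row_len lam i \<le> Suc (row_len g i)" using strip by (simp add: vertical_strip_def)
    ultimately show ?thesis using g that by simp
  qed
  define d where "d i = row_len lam i - row_len g i" for i
  have lam_d: "row_len lam i = row_len g i + d i" for i using strip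
    by (simp add: d_def vertical_strip_def)
  define L where "L = max (length lam) (length g) + m"
  have "sum_list lam = (\<Sum>i<L. row_len lam i)" by (rule sum_list_eq_sum_row_len) (simp add: L_def)
  moreover have "sum_list g = (\<Sum>i<L. row_len g i)"
    by (rule sum_list_eq_sum_row_len) (simp add: L_def)
  ultimately have "(\<Sum>i<L. row_len g i) + (m - 1) = (\<Sum>i<L. row_len g i) + (\<Sum>i<L. d i)"
    using strip by (simp add: vertical_strip_def lam_d sum.distrib)
  then have sd: "(\<Sum>i<L. d i) = m - 1" by simp
  have sub: "{1..m - 1} \<subseteq> {..<L}" by (auto simp: L_def)
  have "(\<Sum>i<L. d i) = (\<Sum>i\<in>{1..m-1}. d i) + (\<Sum>i\<in>{..<L} - {1..m-1}. d i)"
    using sub by (simp add: sum.subset_diff[of "{1..m-1}" "{..<L}"] add.commute)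
  moreover have "(\<Sum>i\<in>{1..m-1}. d i) = m - 1" using grow by (simp add: d_def)
  ultimately have "(\<Sum>i\<in>{..<L} - {1..m-1}. d i) = 0" using sd by simp
  then have z: "\<forall>i\<in>{..<L} - {1..m-1}. d i = 0" by simp
  show ?thesis
  proof (cases "1 \<le> i \<and> i \<le> m - 1")
    case True then show ?thesis using grow by simp
  next
    case False
    show ?thesis
    proof (cases "i < L")
      case True then show ?thesis using z False lam_d[of i] by auto
    next
      case F2: False
      then have "row_len lam i = 0" "row_len g i = 0" by (auto simp: row_len_def L_def)
      then show ?thesis using False by simp
    qed
  qed
qed

definition stair :: "nat \<Rightarrow> nat \<Rightarrow> nat \<Rightarrow> nat list" where
  "stair x m t = x # rev [2..<m] @ replicate t 1"

lemma row_len_stair: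
  assumes "2 \<le> m"
  shows "row_len (stair x m t) i =
    (if i = 0 then x else if i \<le> m - 2 then m - i else if i < m - 1 + t then 1 else 0)"
proof (cases i)
  case (Suc j)
  then show ?thesis using assms
    by (cases "j < m - 2") (auto simp: stair_def row_len_def nth_append rev_nth)
qed (simp add: stair_def row_len_def)

lemma length_stair: "2 \<le> m \<Longrightarrow> length (stair x m t) = m - 1 + t"
  by (simp add: stair_def)

lemma is_partition_stair:
  assumes "2 \<le> m" "m - 1 \<le> x"
  shows "is_partition (stair x m t)"
  unfolding is_partition_iff_row_len
proof (intro conjI allI impI)
  fix i
  show "row_len (stair x m t) (Suc i) \<le> row_len (stair x m t) i"
    unfolding row_len_stair[OF assms(1)] using assms by (simp split: if_split) arith
  assume "i < length (stair x m t)"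
  then show "0 < row_len (stair x m t) i"
    unfolding row_len_stair[OF assms(1)] using assms by (simp add: length_stair) arith
qed

lemma adapted_stair:
  assumes "2 \<le> m" "m \<le> x"
  shows "adapted m (stair x m t)"
  unfolding adapted_iff_row_len
proof (intro allI impI)
  fix k assume "k < length (stair x m t)"
  then show "int m - int (Suc k) < int (row_len (stair x m t) k)"
    unfolding row_len_stair[OF assms(1)] using assms by (simp add: length_stair) arith
qed

lemma vertical_strip_single_row_iff:
  assumes "0 < a" "0 < k"
  shows "vertical_strip [a] k lam \<longleftrightarrow> lam = stair (Suc a) 2 (k - 1) \<or> lam = stair a 2 k"
proof
  assume strip: "vertical_strip [a] k lam"
  have lam: "is_partition lam" using strip by (simp add: vertical_strip_def)
  have first: "row_len lam 0 = a \<or> row_len lam 0 = Suc a"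
    using vertical_strip_row_len_cases[OF strip, of 0] by (simp add: row_len_def)
  then have "0 < length lam" using assms partition_row_len_pos_iff[OF lam, of 0] by auto
  define r where "r = row_len lam 0"
  define t where "t = length lam - 1"
  have lam_eq: "lam = r # replicate t 1"
  proof (rule nth_equalityI)
    fix i assume i: "i < length lam"
    show "lam ! i = (r # replicate t 1) ! i"
    proof (cases i)
      case (Suc j)
      have "row_len lam i \<le> Suc (row_len [a] i)" using strip by (simp add: vertical_strip_def)
      moreover have "0 < row_len lam i" using partition_row_len_pos_iff[OF lam] i by simp
      ultimately show ?thesis using Suc i by (simp add: row_len_def t_def)
    qed (use i in \<open>simp add: row_len_def r_def\<close>)
  qed (use \<open>0 < length lam\<close> in \<open>simp add: t_def\<close>)
  have "r + t = a + k"
    using strip unfolding lam_eq by (simp add: vertical_strip_def sum_list_replicate)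
  moreover have "r = a \<or> r = Suc a" using first by (simp add: r_def)
  ultimately show "lam = stair (Suc a) 2 (k - 1) \<or> lam = stair a 2 k"
    unfolding lam_eq by (auto simp: stair_def)
next
  have row_len_hook: "row_len (stair x 2 t) i = (if i
    = 0 then x else if i \<le> t then 1 else 0)" for x t i
    by (simp add: row_len_stair)
  have row_len_a: "row_len [a] i = (if i = 0 then a else 0)" for i
    by (simp add: row_len_def)
  assume "lam = stair (Suc a) 2 (k - 1) \<or> lam = stair a 2 k"
  then show "vertical_strip [a] k lam"
  proof
    assume lam: "lam = stair (Suc a) 2 (k - 1)"
    have "row_len lam i = row_len [a] i + (if i \<in> {0..<k} then 1 else 0)" for i
      using assms by (cases "i = 0") (auto simp: lam row_len_hook row_len_a)
    from vertical_strip_of_add_rows[OF _ _ this] show ?thesis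
      by (simp add: lam is_partition_stair)
  next
    assume lam: "lam = stair a 2 k"
    have "row_len lam i = row_len [a] i + (if i \<in> {1..k} then 1 else 0)" for i
      using assms by (cases "i = 0") (auto simp: lam row_len_hook row_len_a)
    from vertical_strip_of_add_rows[OF _ _ this] show ?thesis
      using assms by (simp add: lam is_partition_stair)
  qed
qed

lemma vertical_strip_stair_iff:
  assumes m: "2 \<le> m" and x: "m \<le> x" and t: "0 < t" and ad: "adapted (Suc m) lam"
  shows "vertical_strip (stair x m t) (m - 1) lam \<longleftrightarrow> lam = stair x (Suc m) (t - 1)"
proof -
  have rows: "row_len (stair x (Suc m) (t - 1)) i =
      row_len (stair x m t) i + (if i \<in> {1..m - 1} then 1 else 0)" for i
    using m t by (simp add: row_len_stair) arith
  have stairs: "is_partition (stair x m t)" "is_partition (stair x (Suc m) (t - 1))"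
    using m x by (auto intro: is_partition_stair)
  show ?thesis
  proof
    assume strip: "vertical_strip (stair x m t) (m - 1) lam"
    have "\<forall>i. 1 \<le> i \<and> i \<le> m - 1 \<longrightarrow> row_len (stair x m t) i = m - i"
      using m t by (auto simp: row_len_stair)
    from adapted_vertical_strip_fills_rows[OF m this ad strip]
    show "lam = stair x (Suc m) (t - 1)"
      using strip stairs(2) rows by (intro partition_eqI) (auto simp: vertical_strip_def)
  next
    assume "lam = stair x (Suc m) (t - 1)"
    with vertical_strip_of_add_rows[OF stairs(2) _ rows]
    show "vertical_strip (stair x m t) (m - 1) lam" by simp
  qed
qed

definition column_product :: "nat \<Rightarrow> nat \<Rightarrow> nat \<Rightarrow> nat \<Rightarrow> ipoly" where
  "column_product n a b m =
     schur n [a] * schur n (replicate b 1) * (\<Prod>k\<in>{1..m-2}. schur n (replicate k 1))"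

lemma column_product_Suc:
  assumes "2 \<le> m"
  shows "column_product n a b (Suc m) = column_product n a b m * schur n (replicate (m - 1) 1)"
proof -
  have "{1..Suc m - 2} = insert (m - 1) {1..m-2}" "m - 1 \<notin> {1..m-2}" using assms by auto
  then show ?thesis unfolding column_product_def by (simp add: ac_simps)
qed

definition hook_stairs :: "nat \<Rightarrow> nat \<Rightarrow> nat \<Rightarrow> nat list set" where
  "hook_stairs a b m = {stair (Suc a) m (Suc b - m), stair a m (b + 2 - m)}"

lemma hook_stairs_props:
  assumes "2 \<le> m" "m \<le> a" "m - 1 \<le> b" "lam \<in> hook_stairs a b m"
  shows "is_partition lam" "length lam \<le> Suc b" "adapted m lam"
  using assms by (auto simp: hook_stairs_def length_stair intro: is_partition_stair adapted_stair)

lemma adapted_coeff_mult_column: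
  assumes c: "schur_expansion n f c" and S: "\<forall>mu\<in>S. is_partition mu"
    and adapted_c: "\<forall>mu. adapted m mu \<longrightarrow> c mu = of_bool (mu \<in> S)"
    and ad: "adapted (Suc m) lam"
  shows "(\<Sum>mu | c mu \<noteq> 0. if vertical_strip mu k lam then c mu else 0)
    = int (card {mu \<in> S. vertical_strip mu k lam})"
proof -
  have adapted_below: "adapted m mu" if "is_partition mu" "vertical_strip mu k lam" for mu
    using adapted_of_vertical_strip[OF that ad] .
  have "(if vertical_strip mu k lam then c mu else 0) = of_bool (mu \<in> S \<and> vertical_strip mu k lam)"
    if "c mu \<noteq> 0" for mu
  proof (cases "vertical_strip mu k lam")
    case True
    then have "adapted m mu" using adapted_below c that by (auto simp: schur_expansion_def)
    then show ?thesis using adapted_c True by simp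
  qed simp
  then have "(\<Sum>mu | c mu \<noteq> 0. if vertical_strip mu k lam then c mu else 0)
      = (\<Sum>mu | c mu \<noteq> 0. of_bool (mu \<in> S \<and> vertical_strip mu k lam))"
    by (intro sum.cong) auto
  also have "\<dots> = int (card ({mu. c mu \<noteq> 0} \<inter> {mu. mu \<in> S \<and> vertical_strip mu k lam}))"
    using c by (simp add: schur_expansion_def)
  also have "{mu. c mu \<noteq> 0} \<inter> {mu. mu \<in> S \<and> vertical_strip mu k lam}
    = {mu \<in> S. vertical_strip mu k lam}"
    using S adapted_c adapted_below by fastforce
  finally show ?thesis .
qed

lemma hook_stairs_Suc_strips:
  assumes m: "2 \<le> m" and ab: "Suc m \<le> a" "m \<le> b" and ad: "adapted (Suc m) lam"
  shows "card {mu \<in> hook_stairs a b m. vertical_strip mu (m - 1) lam}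
    = of_bool (lam \<in> hook_stairs a b (Suc m))"
proof -
  define A where "A = stair (Suc a) m (Suc b - m)"
  define B where "B = stair a m (b + 2 - m)"
  define A' where "A' = stair (Suc a) (Suc m) (b - m)"
  define B' where "B' = stair a (Suc m) (b + 1 - m)"
  have AB: "hook_stairs a b m = {A, B}" "hook_stairs a b (Suc m) = {A', B'}"
    by (simp_all add: hook_stairs_def A_def B_def A'_def B'_def)
  have "A \<noteq> B" "A' \<noteq> B'" by (simp_all add: A_def B_def A'_def B'_def stair_def)
  have strip_A: "vertical_strip A (m - 1) lam \<longleftrightarrow> lam = A'"
    unfolding A_def A'_def using vertical_strip_stair_iff[OF m _ _ ad, of "Suc a" "Suc b - m"] ab
    by (simp add: Suc_diff_le)
  have strip_B: "vertical_strip B (m - 1) lam \<longleftrightarrow> lam = B'"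
    unfolding B_def B'_def using vertical_strip_stair_iff[OF m _ _ ad, of a "b + 2 - m"] ab
    by (simp add: Suc_diff_le)
  have "{mu \<in> {A, B}. vertical_strip mu (m - 1) lam} =
      (if lam = A' then {A} else {}) \<union> (if lam = B' then {B} else {})"
    using strip_A strip_B by auto
  then show ?thesis unfolding AB using \<open>A \<noteq> B\<close> \<open>A' \<noteq> B'\<close> by (cases "lam = A'") auto
qed

lemma column_product_2_coeffs:
  assumes "2 \<le> a" "1 \<le> b" and n: "Suc b \<le> n"
  shows "\<exists>c. schur_expansion n (column_product n a b 2) c \<and> (\<forall>lam. c lam
    = of_bool (lam \<in> hook_stairs a b 2))"
proof -
  define c0 :: "nat list \<Rightarrow> int" where "c0 lam = of_bool (lam = [a])" for lam
  have c0: "schur_expansion n (schur n [a]) c0"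
    using assms by (auto simp: schur_expansion_def c0_def is_partition_def)
  define c where "c lam = (if is_partition lam \<and> length lam \<le> n then
      (\<Sum>mu | c0 mu \<noteq> 0. if vertical_strip mu b lam then c0 mu else 0) else 0)" for lam
  have "schur_expansion n (column_product n a b 2) c"
    unfolding c_def column_product_def using schur_expansion_mult_column[OF c0] by simp
  moreover have "c lam = of_bool (lam \<in> hook_stairs a b 2)" for lam
  proof (cases "is_partition lam \<and> length lam \<le> n")
    case True
    have "{mu. c0 mu \<noteq> 0} = {[a]}" by (simp add: c0_def)
    then have "c lam = of_bool (vertical_strip [a] b lam)"
      using True unfolding c_def by (simp add: c0_def)
    then show ?thesis
      using vertical_strip_single_row_iff[of a b lam] assms by (simp add: hook_stairs_def)
  next
    case False
    moreover have "length lam \<le> n \<and> is_partition lam" if "lam \<in> hook_stairs a b 2"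
      using hook_stairs_props(1,2)[OF _ _ _ that] assms by simp
    ultimately show ?thesis by (auto simp: c_def)
  qed
  ultimately show ?thesis by blast
qed

lemma column_product_Suc_adapted_coeffs:
  assumes m: "2 \<le> m" and ab: "Suc m \<le> a" "m \<le> b" and n: "Suc b \<le> n"
    and c: "schur_expansion n (column_product n a b m) c"
    and adapted_c: "\<forall>lam. adapted m lam \<longrightarrow> c lam = of_bool (lam \<in> hook_stairs a b m)"
  shows "\<exists>c'. schur_expansion n (column_product n a b (Suc m)) c' \<and>
    (\<forall>lam. adapted (Suc m) lam \<longrightarrow> c' lam = of_bool (lam \<in> hook_stairs a b (Suc m)))"
proof -
  define c' where "c' lam = (if is_partition lam \<and> length lam \<le> n then
      (\<Sum>mu | c mu \<noteq> 0. if vertical_strip mu (m - 1) lam then c mu else 0) else 0)" for lam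
  have "schur_expansion n (column_product n a b (Suc m)) c'"
    unfolding c'_def column_product_Suc[OF m] by (rule schur_expansion_mult_column[OF c])
  moreover have "c' lam = of_bool (lam \<in> hook_stairs a b (Suc m))" if ad: "adapted (Suc m) lam" for lam
  proof (cases "is_partition lam \<and> length lam \<le> n")
    case True
    have "m \<le> a" "m - 1 \<le> b" using ab by auto
    then have "\<forall>mu\<in>hook_stairs a b m. is_partition mu"
      using hook_stairs_props(1)[OF m] by blast
    then show ?thesis
      using True adapted_coeff_mult_column[OF c _ adapted_c ad] hook_stairs_Suc_strips[OF m ab ad]
      by (simp add: c'_def)
  next
    case False
    moreover have "length lam \<le> n \<and> is_partition lam" if "lam \<in> hook_stairs a b (Suc m)"
      using hook_stairs_props(1,2)[OF _ _ _ that] m ab n by simp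
    ultimately show ?thesis by (auto simp: c'_def)
  qed
  ultimately show ?thesis by blast
qed

lemma column_product_adapted_coeffs:
  assumes "2 \<le> m" "m \<le> a" "m - 1 \<le> b" and n: "Suc b \<le> n"
  shows "\<exists>c. schur_expansion n (column_product n a b m) c \<and>
    (\<forall>lam. adapted m lam \<longrightarrow> c lam = of_bool (lam \<in> hook_stairs a b m))"
  using assms(1-3)
proof (induction m rule: nat_induct_at_least)
  case base
  then show ?case using column_product_2_coeffs[OF _ _ n] by fastforce
next
  case (Suc m)
  have "m - 1 \<le> b" using Suc.prems by simp
  then obtain c where "schur_expansion n (column_product n a b m) c"
    "\<forall>lam. adapted m lam \<longrightarrow> c lam = of_bool (lam \<in> hook_stairs a b m)"
    using Suc.IH Suc.prems by auto
  then show ?case using column_product_Suc_adapted_coeffs[OF Suc.hyps _ _ n] Suc.prems by simp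
qed

theorem lemma5p4:
  fixes m a b :: nat
  assumes "m \<ge> 2" and "a \<ge> m" and "b \<ge> m - 1"
  shows "\<exists>N. \<forall>n\<ge>N.
    Cop m n (schur n [a] * schur n (replicate b 1) *
             (\<Prod>k\<in>{1..m-2}. schur n (replicate k 1)))
    = schur n ((a + 1) # rev [2..<m] @ replicate (b + 1 - m) 1)
      + schur n (a # rev [2..<m] @ replicate (b + 2 - m) 1)"
proof -
  have "Cop m n (column_product n a b m) = (\<Sum>lam\<in>hook_stairs a b m. schur n lam)"
    if n: "Suc b \<le> n" for n
  proof -
    obtain c where c: "schur_expansion n (column_product n a b m) c"
      and adapted_c: "\<forall>lam. adapted m lam \<longrightarrow> c lam = of_bool (lam \<in> hook_stairs a b m)"
      using column_product_adapted_coeffs[OF assms n] by blast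
    have "{lam. c lam \<noteq> 0 \<and> adapted m lam} = hook_stairs a b m"
      using adapted_c hook_stairs_props(3)[OF assms] by auto
    then show ?thesis
      using Cop_eq_sum_adapted[OF c] adapted_c hook_stairs_props(3)[OF assms] by simp
  qed
  then show ?thesis
    by (intro exI[of _ "Suc b"]) (auto simp: column_product_def hook_stairs_def stair_def)
qed

end
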